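(* Let $\alpha,\beta>0$, let $n$ be a positive integer, $0<k\le n-1$ an integer, and $g\in H(\mathbb{D})$. Let $I_g^{n,k}f=I^n(f^{(k)}g)$. Then (i) $I_g^{n,k}:\mathcal{B}^{\alpha}\to\mathcal{B}^{\beta}$ is bounded if and only if $\sup_{z\in\mathbb{D}}(1-|z|^2)^{n-k+\beta-\alpha}|g(z)|<\infty$; (ii) $I_g^{n,k}:\mathcal{B}^{\alpha}\to\mathcal{B}^{\beta}$ is compact if and only if $\lim_{|z|\to1^-}(1-|z|^2)^{n-k+\beta-\alpha}|g(z)|=0$.
   Context: $\mathbb{D}$ is the open unit disc in $\mathbb{C}$ and $H(\mathbb{D})$ the space of analytic functions on $\mathbb{D}$. For $\alpha>0$, $\mathcal{B}^{\alpha}$ is the Banach space of $f\in H(\mathbb{D})$ with $\|f\|_{\mathcal{B}^{\alpha}}=|f(0)|+\sup_{z\in\mathbb{D}}(1-|z|^2)^{\alpha}|f'(z)|<\infty$. $I$ is the integration operator $If(z)=\int_0^z f(\zeta)\,d\zeta$ and $I^n$ its $n$th iterate. An operator is bounded (compact) from $\mathcal{B}^\alpha$ to $\mathcal{B}^\beta$ if it maps $\mathcal{B}^\alpha$ into $\mathcal{B}^\beta$ and is bounded (compact) as a linear operator between these Banach spaces. *)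

theory Defs
  imports "HOL-Complex_Analysis.Complex_Analysis"
begin

definition unit_disc :: "complex set" where
  "unit_disc = ball 0 1"

text \<open>The Bloch-type space B^alpha (as a set of functions; only values on the disc matter).\<close>
definition bloch_space :: "real \<Rightarrow> (complex \<Rightarrow> complex) set" where
  "bloch_space \<alpha> = {f. f holomorphic_on unit_disc \<and>
     (\<exists>C. \<forall>z\<in>unit_disc. (1 - (cmod z)^2) powr \<alpha> * cmod (deriv f z) \<le> C)}"

definition bloch_norm :: "real \<Rightarrow> (complex \<Rightarrow> complex) \<Rightarrow> real" where
  "bloch_norm \<alpha> f = cmod (f 0) +
     (SUP z\<in>unit_disc. (1 - (cmod z)^2) powr \<alpha> * cmod (deriv f z))"

definition integ_op :: "(complex \<Rightarrow> complex) \<Rightarrow> complex \<Rightarrow> complex" where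
  "integ_op f z = contour_integral (linepath 0 z) f"

definition Ignk :: "(complex \<Rightarrow> complex) \<Rightarrow> nat \<Rightarrow> nat \<Rightarrow> (complex \<Rightarrow> complex) \<Rightarrow> complex \<Rightarrow> complex" where
  "Ignk g n k f = (integ_op ^^ n) (\<lambda>z. (deriv ^^ k) f z * g z)"

definition bounded_bloch_op :: "real \<Rightarrow> real \<Rightarrow> ((complex \<Rightarrow> complex) \<Rightarrow> complex \<Rightarrow> complex) \<Rightarrow> bool" where
  "bounded_bloch_op \<alpha> \<beta> T \<longleftrightarrow>
     (\<forall>f\<in>bloch_space \<alpha>. T f \<in> bloch_space \<beta>) \<and>
     (\<exists>C. \<forall>f\<in>bloch_space \<alpha>. bloch_norm \<beta> (T f) \<le> C * bloch_norm \<alpha> f)"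

definition compact_bloch_op :: "real \<Rightarrow> real \<Rightarrow> ((complex \<Rightarrow> complex) \<Rightarrow> complex \<Rightarrow> complex) \<Rightarrow> bool" where
  "compact_bloch_op \<alpha> \<beta> T \<longleftrightarrow>
     (\<forall>f\<in>bloch_space \<alpha>. T f \<in> bloch_space \<beta>) \<and>
     (\<forall>fs :: nat \<Rightarrow> complex \<Rightarrow> complex. (\<forall>j. fs j \<in> bloch_space \<alpha>) \<longrightarrow>
        (\<exists>M. \<forall>j. bloch_norm \<alpha> (fs j) \<le> M) \<longrightarrow>
        (\<exists>r h. strict_mono r \<and> h \<in> bloch_space \<beta> \<and>
           (\<lambda>j. bloch_norm \<beta> (\<lambda>z. T (fs (r j)) z - h z)) \<longlonglongrightarrow> 0))"

end

theory Submission
  imports Defs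
begin

(* A function in B^alpha has k-th derivative of growth (1 - |z|)^-(alpha + k - 1) by the Cauchy
   estimates, and integrating along radii lowers a growth exponent gamma > 1 by one. Under the weight
   condition f^(k) g therefore grows at most like (1 - |z|)^-(n - 1 + beta), and n integrations land
   in B^beta. Conversely, the test functions f_a(w) = (1 - |a|^2)^(m + 1 - alpha) / (1 - conj a w)^m
   with m >= alpha are uniformly bounded in B^alpha, and the Cauchy estimate for the (n-1)-st
   derivative of I^(n-1)(f_a^(k) g) at the point a recovers the weight condition at a.
   For compactness, Montel's theorem provides locally uniform limits of the f_j^(k), while the
   little-o condition controls the part near the boundary; conversely f_a tends to 0 locally
   uniformly as |a| tends to 1. *)

lemma mem_unit_disc [simp]: "z \<in> unit_disc \<longleftrightarrow> cmod z < 1"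
  by (simp add: unit_disc_def)

lemma open_unit_disc [simp]: "open unit_disc"
  by (simp add: unit_disc_def)

lemma closed_segment_0_subset_unit_disc: "z \<in> unit_disc \<Longrightarrow> closed_segment 0 z \<subseteq> unit_disc"
  unfolding unit_disc_def by (simp add: closed_segment_subset)

lemma cball_0_subset_unit_disc: "r < 1 \<Longrightarrow> cball 0 r \<subseteq> unit_disc"
  by auto

lemma one_minus_norm_sq_pos: "cmod z < 1 \<Longrightarrow> 0 < 1 - cmod z ^ 2"
  by (simp add: power_less_one_iff)

lemma deriv_diff_unit_disc:
  assumes "f holomorphic_on unit_disc" "h holomorphic_on unit_disc" "w \<in> unit_disc"
  shows "deriv (\<lambda>z. f z - h z) w = deriv f w - deriv h w"
  by (rule deriv_diff; rule holomorphic_on_imp_differentiable_at[OF _ open_unit_disc assms(3)])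
     (use assms in auto)

lemma continuous_on_cball_bounded_above:
  fixes \<phi> :: "complex \<Rightarrow> real"
  assumes "continuous_on (cball 0 r) \<phi>"
  obtains G where "\<And>z. cmod z \<le> r \<Longrightarrow> \<phi> z \<le> G"
proof -
  have "compact (\<phi> ` cball 0 r)" by (rule compact_continuous_image[OF assms compact_cball])
  then obtain G where "\<forall>x\<in>\<phi> ` cball 0 r. norm x \<le> G" using compact_imp_bounded bounded_iff by metis
  then show ?thesis using that by (metis abs_le_D1 image_eqI mem_cball_0 real_norm_def)
qed

lemma compact_subset_unit_disc_norm_le:
  assumes "compact K" "K \<subseteq> unit_disc"
  obtains r where "r < 1" "\<And>z. z \<in> K \<Longrightarrow> cmod z \<le> r"
proof (cases "K = {}")
  case True then show ?thesis using that[of 0] by auto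
next
  case False
  obtain x where "x \<in> K" "\<forall>y\<in>K. cmod y \<le> cmod x"
    using continuous_attains_sup[OF assms(1) False continuous_on_norm_id] by blast
  then show ?thesis using that[of "cmod x"] assms(2) by auto
qed

section \<open>Iterated integration on the disc\<close>

lemma integ_op_has_field_derivative:
  assumes "u holomorphic_on unit_disc" "z \<in> unit_disc"
  shows "(integ_op u has_field_derivative u z) (at z)"
proof -
  have convex: "convex unit_disc" by (simp add: unit_disc_def)
  have "(integ_op u has_field_derivative u z) (at z within unit_disc)"
    unfolding integ_op_def[abs_def]
  proof (rule triangle_contour_integrals_convex_primitive[OF _ _ convex assms(2)])
    show "continuous_on unit_disc u" using assms(1) holomorphic_on_imp_continuous_on by blast
    fix b c assume "b \<in> unit_disc" "c \<in> unit_disc"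
    then have "convex hull {0, b, c} \<subseteq> unit_disc" using convex by (simp add: hull_minimal)
    then have "u holomorphic_on convex hull {0, b, c}" using assms(1) holomorphic_on_subset by blast
    then show "contour_integral (linepath 0 b) u + contour_integral (linepath b c) u +
               contour_integral (linepath c 0) u = 0"
      using Cauchy_theorem_triangle has_chain_integral_chain_integral3 by blast
  qed simp
  then show ?thesis using assms(2) at_within_open[of z unit_disc] by simp
qed

lemma holomorphic_on_integ_op: "u holomorphic_on unit_disc \<Longrightarrow> integ_op u holomorphic_on unit_disc"
  using integ_op_has_field_derivative holomorphic_on_open open_unit_disc by blast

lemma holomorphic_on_integ_op_iterate:
  "u holomorphic_on unit_disc \<Longrightarrow> (integ_op ^^ j) u holomorphic_on unit_disc"
  by (induction j) (auto simp: holomorphic_on_integ_op)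

lemma deriv_integ_op_iterate_Suc:
  assumes "u holomorphic_on unit_disc" "z \<in> unit_disc"
  shows "deriv ((integ_op ^^ Suc j) u) z = (integ_op ^^ j) u z"
  using integ_op_has_field_derivative[OF holomorphic_on_integ_op_iterate[OF assms(1)] assms(2)]
  by (simp add: DERIV_imp_deriv)

lemma integ_op_iterate_Suc_at_0: "(integ_op ^^ Suc j) u 0 = 0"
  by (simp add: integ_op_def)

lemma higher_deriv_integ_op_iterate:
  assumes u: "u holomorphic_on unit_disc" and z: "z \<in> unit_disc"
  shows "(deriv ^^ j) ((integ_op ^^ j) u) z = u z"
  using z
proof (induction j arbitrary: z)
  case 0 then show ?case by simp
next
  case (Suc j)
  have "(deriv ^^ Suc j) ((integ_op ^^ Suc j) u) z = (deriv ^^ j) (deriv ((integ_op ^^ Suc j) u)) z"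
    by (simp only: funpow_Suc_right comp_def)
  also have "\<dots> = (deriv ^^ j) ((integ_op ^^ j) u) z"
    by (rule higher_deriv_cong_ev[OF _ refl])
       (use eventually_nhds_in_open[OF open_unit_disc Suc.prems] deriv_integ_op_iterate_Suc[OF u]
         in \<open>auto elim: eventually_mono\<close>)
  finally show ?case using Suc by simp
qed

lemma contour_integrable_on_linepath_0:
  assumes "u holomorphic_on unit_disc" "z \<in> unit_disc"
  shows "u contour_integrable_on linepath 0 z"
  by (rule contour_integrable_holomorphic_simple[OF assms(1) open_unit_disc])
     (use closed_segment_0_subset_unit_disc[OF assms(2)] in auto)

lemma integ_op_cong:
  assumes "\<And>w. w \<in> unit_disc \<Longrightarrow> u w = v w" "z \<in> unit_disc"
  shows "integ_op u z = integ_op v z"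
  unfolding integ_op_def
  by (rule contour_integral_eq) (use assms(1) closed_segment_0_subset_unit_disc[OF assms(2)] in auto)

lemma integ_op_iterate_diff:
  assumes u: "u holomorphic_on unit_disc" and v: "v holomorphic_on unit_disc" and z: "z \<in> unit_disc"
  shows "(integ_op ^^ j) (\<lambda>w. u w - v w) z = (integ_op ^^ j) u z - (integ_op ^^ j) v z"
  using z
proof (induction j arbitrary: z)
  case 0 then show ?case by simp
next
  case (Suc j)
  have "(integ_op ^^ Suc j) (\<lambda>w. u w - v w) z
      = integ_op (\<lambda>w. (integ_op ^^ j) u w - (integ_op ^^ j) v w) z"
    using integ_op_cong[OF Suc.IH Suc.prems] by simp
  also have "\<dots> = (integ_op ^^ Suc j) u z - (integ_op ^^ Suc j) v z"
    unfolding funpow.simps comp_def integ_op_def[of "\<lambda>w. (integ_op ^^ j) u w - (integ_op ^^ j) v w"]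
      integ_op_def[of "(integ_op ^^ j) u"] integ_op_def[of "(integ_op ^^ j) v"]
    by (intro contour_integral_diff contour_integrable_on_linepath_0
          holomorphic_on_integ_op_iterate u v Suc.prems)
  finally show ?case .
qed

lemma norm_integ_op_iterate_le:
  assumes u: "u holomorphic_on unit_disc" and r: "r < 1"
    and bound: "\<And>w. cmod w \<le> r \<Longrightarrow> cmod (u w) \<le> \<delta>" and z: "cmod z \<le> r"
  shows "cmod ((integ_op ^^ j) u z) \<le> \<delta>"
  using z
proof (induction j arbitrary: z)
  case 0 then show ?case using bound by simp
next
  case (Suc j)
  have \<delta>: "0 \<le> \<delta>" using bound[OF Suc.prems] norm_ge_zero order_trans by blast
  have zD: "z \<in> unit_disc" using Suc.prems r by simp
  have "((integ_op ^^ j) u has_contour_integral (integ_op ^^ Suc j) u z) (linepath 0 z)"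
    unfolding funpow.simps comp_def integ_op_def[of "(integ_op ^^ j) u"]
    by (intro has_contour_integral_integral contour_integrable_on_linepath_0
          holomorphic_on_integ_op_iterate u zD)
  then have "cmod ((integ_op ^^ Suc j) u z) \<le> \<delta> * cmod (z - 0)"
  proof (rule has_contour_integral_bound_linepath[OF _ \<delta>])
    fix x assume "x \<in> closed_segment 0 z"
    then have "cmod x \<le> cmod z" using segment_bound(1)[of x 0 z] by simp
    then show "cmod ((integ_op ^^ j) u x) \<le> \<delta>" using Suc.IH Suc.prems by auto
  qed
  also have "\<dots> \<le> \<delta>" using zD \<delta> by (simp add: mult_left_le)
  finally show ?case .
qed

lemma norm_integ_op_le_growth:
  assumes u: "u holomorphic_on unit_disc" and \<gamma>: "\<gamma> > 1" and M: "M \<ge> 0"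
    and bound: "\<And>w. w \<in> unit_disc \<Longrightarrow> cmod (u w) \<le> M * (1 - cmod w) powr (-\<gamma>)"
    and z: "z \<in> unit_disc"
  shows "cmod (integ_op u z) \<le> M / (\<gamma> - 1) * (1 - cmod z) powr (-(\<gamma> - 1))"
proof -
  define f where "f t = integ_op u (of_real t * z)" for t :: real
  define \<phi> where "\<phi> t = M / (\<gamma> - 1) * (1 - t * cmod z) powr (1 - \<gamma>)" for t :: real
  have tz: "of_real t * z \<in> unit_disc" and pos: "0 < 1 - t * cmod z"
    if "0 \<le> t" "t \<le> 1" for t
  proof -
    have "t * cmod z \<le> cmod z" using that by (simp add: mult_left_le_one_le)
    then show "of_real t * z \<in> unit_disc" "0 < 1 - t * cmod z"
      using z that by (auto simp: norm_mult)
  qed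
  have "norm (f 1 - f 0) \<le> \<phi> 1 - \<phi> 0"
  proof (rule differentiable_bound_general[of 0 1 f \<phi> "\<lambda>t. z * u (of_real t * z)"
        "\<lambda>t. M * cmod z * (1 - t * cmod z) powr (-\<gamma>)"])
    show "continuous_on {0..1} f" unfolding f_def
      by (rule continuous_on_compose2[OF holomorphic_on_imp_continuous_on[OF holomorphic_on_integ_op[OF u]]])
         (auto intro!: continuous_intros tz)
    show "continuous_on {0..1} \<phi>" unfolding \<phi>_def
      by (intro continuous_intros) (use pos in \<open>metis atLeastAtMost_iff less_irrefl\<close>)+
    fix t :: real assume t: "0 < t" "t < 1"
    have "((\<lambda>t. of_real t * z) has_vector_derivative z) (at t)"
      by (rule has_vector_derivative_real_field[where f="\<lambda>w. w * z"]) (auto intro!: derivative_eq_intros)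
    from field_vector_diff_chain_at[OF this integ_op_has_field_derivative[OF u tz]] t
    show "(f has_vector_derivative z * u (of_real t * z)) (at t)"
      unfolding f_def comp_def by simp
    have "(\<phi> has_real_derivative M * cmod z * (1 - t * cmod z) powr (-\<gamma>)) (at t)"
      unfolding \<phi>_def
      apply (rule derivative_eq_intros refl | use pos t in force)+
      using \<gamma> pos[of t] t by (simp add: field_simps powr_diff)
    then show "(\<phi> has_vector_derivative M * cmod z * (1 - t * cmod z) powr (-\<gamma>)) (at t)"
      by (simp add: has_real_derivative_iff_has_vector_derivative)
    have "cmod (z * u (of_real t * z)) = cmod z * cmod (u (of_real t * z))" by (simp add: norm_mult)
    also have "\<dots> \<le> cmod z * (M * (1 - cmod (of_real t * z)) powr (-\<gamma>))"
      by (rule mult_left_mono[OF bound[OF tz]]) (use t in auto)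
    also have "cmod (of_real t * z) = t * cmod z" using t by (simp add: norm_mult)
    finally show "cmod (z * u (of_real t * z)) \<le> M * cmod z * (1 - t * cmod z) powr (-\<gamma>)"
      by (simp add: mult_ac)
  qed simp
  moreover have "f 0 = 0" "f 1 = integ_op u z" unfolding f_def by (simp_all add: integ_op_def)
  moreover have "\<phi> 0 \<ge> 0" unfolding \<phi>_def using M \<gamma> by simp
  ultimately show ?thesis unfolding \<phi>_def by simp
qed

fun integ_growth_const :: "real \<Rightarrow> nat \<Rightarrow> real" where
  "integ_growth_const \<gamma> 0 = 1"
| "integ_growth_const \<gamma> (Suc j) = integ_growth_const \<gamma> j / (\<gamma> - real j - 1)"

lemma integ_growth_const_pos: "\<gamma> > real j \<Longrightarrow> integ_growth_const \<gamma> j > 0"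
  by (induction j) auto

lemma norm_integ_op_iterate_le_growth:
  assumes u: "u holomorphic_on unit_disc" and M: "M \<ge> 0" and \<gamma>: "\<gamma> > real j"
    and bound: "\<And>w. w \<in> unit_disc \<Longrightarrow> cmod (u w) \<le> M * (1 - cmod w) powr (-\<gamma>)"
    and z: "z \<in> unit_disc"
  shows "cmod ((integ_op ^^ j) u z) \<le> integ_growth_const \<gamma> j * M * (1 - cmod z) powr (-(\<gamma> - real j))"
  using \<gamma> z
proof (induction j arbitrary: z)
  case 0 then show ?case using bound by simp
next
  case (Suc j)
  have \<gamma>j: "\<gamma> > real j" "\<gamma> - real j > 1" using Suc.prems by auto
  have K: "integ_growth_const \<gamma> j * M \<ge> 0" using integ_growth_const_pos[OF \<gamma>j(1)] M by simp
  have "cmod (integ_op ((integ_op ^^ j) u) z)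
      \<le> integ_growth_const \<gamma> j * M / (\<gamma> - real j - 1) * (1 - cmod z) powr (-(\<gamma> - real j - 1))"
    by (rule norm_integ_op_le_growth[OF holomorphic_on_integ_op_iterate[OF u] \<gamma>j(2) K _ Suc.prems(2)])
       (use Suc.IH \<gamma>j in auto)
  then show ?case by (simp add: algebra_simps)
qed

section \<open>Growth weights and Cauchy estimates\<close>

lemma one_plus_norm_powr_le:
  fixes w :: complex
  assumes "cmod w < 1"
  shows "(1 + cmod w) powr t \<le> 2 powr \<bar>t\<bar>"
proof (cases "t \<ge> 0")
  case True
  then show ?thesis using assms by (simp add: powr_mono2)
next
  case False
  then have "(1 + cmod w) powr t \<le> (1 + cmod w) powr 0" by (intro powr_mono) auto
  also have "\<dots> = 1" using add_pos_nonneg[OF zero_less_one norm_ge_zero[of w]] by simp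
  also have "1 \<le> 2 powr \<bar>t\<bar>" using ge_one_powr_ge_zero[of 2 "\<bar>t\<bar>"] by simp
  finally show ?thesis .
qed

lemma one_minus_norm_sq_powr_le:
  fixes w :: complex
  assumes "cmod w < 1"
  shows "(1 - cmod w ^ 2) powr s \<le> 2 powr \<bar>s\<bar> * (1 - cmod w) powr s"
proof -
  have "(1 - cmod w ^ 2) powr s = (1 - cmod w) powr s * (1 + cmod w) powr s"
    using assms by (simp add: powr_mult[symmetric] power2_eq_square algebra_simps)
  also have "\<dots> \<le> (1 - cmod w) powr s * 2 powr \<bar>s\<bar>"
    by (rule mult_left_mono[OF one_plus_norm_powr_le[OF assms]]) simp
  finally show ?thesis by (simp add: mult_ac)
qed

lemma one_minus_norm_powr_le:
  fixes w :: complex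
  assumes "cmod w < 1"
  shows "(1 - cmod w) powr s \<le> 2 powr \<bar>s\<bar> * (1 - cmod w ^ 2) powr s"
proof -
  have "1 - cmod w ^ 2 = (1 - cmod w) * (1 + cmod w)" by (simp add: power2_eq_square algebra_simps)
  then have "(1 - cmod w ^ 2) powr s * (1 + cmod w) powr (-s)
      = (1 - cmod w) powr s * ((1 + cmod w) powr s * (1 + cmod w) powr (-s))"
    using assms by (simp add: powr_mult)
  also have "(1 + cmod w) powr s * (1 + cmod w) powr (-s) = 1"
    using add_pos_nonneg[OF zero_less_one norm_ge_zero[of w]] by (simp add: powr_add[symmetric])
  finally have "(1 - cmod w) powr s = (1 - cmod w ^ 2) powr s * (1 + cmod w) powr (-s)" by simp
  also have "\<dots> \<le> (1 - cmod w ^ 2) powr s * 2 powr \<bar>s\<bar>"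
    using mult_left_mono[OF one_plus_norm_powr_le[OF assms, of "-s"]] by simp
  finally show ?thesis by (simp add: mult_ac)
qed

lemma one_le_one_minus_norm_powr:
  assumes "cmod z < 1" "\<gamma> \<ge> 0"
  shows "1 \<le> (1 - cmod z) powr (-\<gamma>)"
  using assms by (simp add: powr_minus one_le_inverse powr_le1)

lemma growth_le_of_weighted_le:
  fixes z :: complex
  assumes z: "cmod z < 1" and x: "0 \<le> x" and c: "(1 - cmod z ^ 2) powr s * x \<le> c"
  shows "x \<le> c * 2 powr \<bar>s\<bar> * (1 - cmod z) powr (-s)"
proof -
  have pos: "(1 - cmod z ^ 2) powr s > 0" using one_minus_norm_sq_pos[OF z] by simp
  have c0: "c \<ge> 0" using x c pos by (meson mult_nonneg_nonneg order_trans less_imp_le)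
  have "x \<le> c * (1 - cmod z ^ 2) powr (-s)"
    using c pos by (simp add: powr_minus field_simps)
  also have "\<dots> \<le> c * (2 powr \<bar>-s\<bar> * (1 - cmod z) powr (-s))"
    by (rule mult_left_mono[OF one_minus_norm_sq_powr_le[OF z] c0])
  finally show ?thesis by (simp add: mult_ac)
qed

lemma norm_mult_le_growth:
  fixes z a b :: complex
  assumes z: "cmod z < 1" and a: "cmod a \<le> A * (1 - cmod z) powr (-p)" and A: "A \<ge> 0"
    and b: "(1 - cmod z ^ 2) powr s * cmod b \<le> c"
  shows "cmod (a * b) \<le> A * c * 2 powr \<bar>s\<bar> * (1 - cmod z) powr (-(p + s))"
proof -
  have "cmod (a * b) \<le> (A * (1 - cmod z) powr (-p)) * (c * 2 powr \<bar>s\<bar> * (1 - cmod z) powr (-s))"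
    unfolding norm_mult by (rule mult_mono[OF a growth_le_of_weighted_le[OF z _ b]]) (use A in auto)
  also have "\<dots> = A * c * 2 powr \<bar>s\<bar> * ((1 - cmod z) powr (-p) * (1 - cmod z) powr (-s))"
    by (simp add: mult_ac)
  finally show ?thesis by (simp add: powr_add[symmetric] add_ac)
qed

lemma weighted_norm_continuous_on_cball:
  assumes g: "g holomorphic_on unit_disc" and r: "r < 1"
  shows "continuous_on (cball 0 r) (\<lambda>z. (1 - cmod z ^ 2) powr s * cmod (g z))"
proof -
  have "continuous_on (cball 0 r) g"
    using holomorphic_on_imp_continuous_on[OF holomorphic_on_subset[OF g cball_0_subset_unit_disc[OF r]]] .
  moreover have "\<And>z. z \<in> cball 0 r \<Longrightarrow> 1 - cmod z ^ 2 \<noteq> 0"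
    using r one_minus_norm_sq_pos by (fastforce simp: less_imp_neq[symmetric])
  ultimately show ?thesis by (intro continuous_intros) auto
qed

lemma norm_higher_deriv_le_growth:
  assumes h: "h holomorphic_on unit_disc" and \<gamma>: "\<gamma> \<ge> 0"
    and bound: "\<And>w. w \<in> unit_disc \<Longrightarrow> cmod (h w) \<le> M * (1 - cmod w) powr (-\<gamma>)"
    and z: "z \<in> unit_disc"
  shows "cmod ((deriv ^^ m) h z) \<le> fact m * M * 2 powr (\<gamma> + m) * (1 - cmod z) powr (-(\<gamma> + m))"
proof -
  define \<rho> where "\<rho> = (1 - cmod z) / 2"
  have \<rho>: "\<rho> > 0" using z by (simp add: \<rho>_def)
  have "0 \<le> M * (1 - cmod z) powr (-\<gamma>)" using bound[OF z] norm_ge_zero order_trans by blast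
  then have M: "M \<ge> 0" using z by (simp add: zero_le_mult_iff)
  have near: "cmod x \<le> cmod z + \<rho>" if "x \<in> cball z \<rho>" for x
    using that norm_triangle_ineq2[of x z] by (simp add: dist_norm norm_minus_commute)
  have sub: "cball z \<rho> \<subseteq> unit_disc"
  proof
    fix x assume "x \<in> cball z \<rho>"
    moreover have "cmod z + \<rho> < 1" using z by (simp add: \<rho>_def field_simps)
    ultimately show "x \<in> unit_disc" using near by fastforce
  qed
  have circle: "cmod (h x) \<le> M * \<rho> powr (-\<gamma>)" if "norm (z - x) = \<rho>" for x
  proof -
    have x: "x \<in> cball z \<rho>" using that by (simp add: dist_norm)
    have "\<rho> \<le> 1 - cmod x" using near[OF x] unfolding \<rho>_def by (simp add: field_simps)
    then have "(1 - cmod x) powr (-\<gamma>) \<le> \<rho> powr (-\<gamma>)" using \<rho> \<gamma> by (simp add: powr_mono2')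
    then show ?thesis using bound[of x] sub x M by (meson mult_left_mono order_trans subsetD)
  qed
  have "cmod ((deriv ^^ m) h z) \<le> fact m * (M * \<rho> powr (-\<gamma>)) / \<rho> ^ m"
    by (rule Cauchy_inequality[OF holomorphic_on_subset[OF h]
          holomorphic_on_imp_continuous_on[OF holomorphic_on_subset[OF h sub]] \<rho> circle])
       (use sub ball_subset_cball in auto)
  also have "\<dots> = fact m * M * (\<rho> powr (-\<gamma>) / \<rho> powr (real m))"
    using \<rho> by (simp add: powr_realpow)
  also have "\<rho> powr (-\<gamma>) / \<rho> powr (real m) = \<rho> powr (-(\<gamma> + m))"
    by (simp add: powr_diff[symmetric])
  also have "\<rho> powr (-(\<gamma> + m)) = 2 powr (\<gamma> + m) * (1 - cmod z) powr (-(\<gamma> + m))"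
    unfolding \<rho>_def using z by (simp add: powr_divide powr_minus divide_simps powr_add[symmetric])
  finally show ?thesis by (simp add: mult_ac)
qed

lemma norm_le_of_integ_op_iterate_growth:
  assumes u: "u holomorphic_on unit_disc" and \<beta>: "\<beta> \<ge> 0" and N: "N \<ge> 0"
    and bound: "\<And>w. w \<in> unit_disc \<Longrightarrow> cmod ((integ_op ^^ j) u w) \<le> N * (1 - cmod w) powr (-\<beta>)"
    and a: "a \<in> unit_disc"
  shows "cmod (u a) \<le> fact j * N * 4 powr (\<beta> + real j) * (1 - cmod a ^ 2) powr (-(\<beta> + real j))"
proof -
  have "cmod (u a) = cmod ((deriv ^^ j) ((integ_op ^^ j) u) a)"
    using higher_deriv_integ_op_iterate[OF u a] by simp
  also have "\<dots> \<le> fact j * N * 2 powr (\<beta> + real j) * (1 - cmod a) powr (-(\<beta> + real j))"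
    by (rule norm_higher_deriv_le_growth[OF holomorphic_on_integ_op_iterate[OF u] \<beta> bound a])
  also have "\<dots> \<le> fact j * N * 2 powr (\<beta> + real j) * (2 powr (\<beta> + real j) * (1 - cmod a ^ 2) powr (-(\<beta> + real j)))"
    using one_minus_norm_powr_le[of a "-(\<beta> + real j)"] a \<beta> N
    by (intro mult_left_mono) (simp_all add: add.commute)
  also have "\<dots> = fact j * N * (2 powr (\<beta> + real j) * 2 powr (\<beta> + real j)) * (1 - cmod a ^ 2) powr (-(\<beta> + real j))"
    by (simp add: mult_ac)
  also have "2 powr (\<beta> + real j) * 2 powr (\<beta> + real j) = 4 powr (\<beta> + real j)"
    using powr_mult[of 2 2 "\<beta> + real j"] by simp
  finally show ?thesis .
qed

lemma bloch_space_imp_holomorphic: "f \<in> bloch_space \<alpha> \<Longrightarrow> f holomorphic_on unit_disc"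
  by (simp add: bloch_space_def)

lemma bloch_norm_le:
  assumes "\<And>w. w \<in> unit_disc \<Longrightarrow> (1 - cmod w ^ 2) powr \<alpha> * cmod (deriv f w) \<le> B"
  shows "bloch_norm \<alpha> f \<le> cmod (f 0) + B"
proof -
  have "0 \<in> unit_disc" by simp
  then have "unit_disc \<noteq> {}" by blast
  then have "(SUP z\<in>unit_disc. (1 - (cmod z)^2) powr \<alpha> * cmod (deriv f z)) \<le> B"
    by (rule cSUP_least) (rule assms)
  then show ?thesis unfolding bloch_norm_def by simp
qed

lemma weighted_deriv_le_bloch_norm:
  assumes "f \<in> bloch_space \<alpha>" "w \<in> unit_disc"
  shows "(1 - cmod w ^ 2) powr \<alpha> * cmod (deriv f w) \<le> bloch_norm \<alpha> f - cmod (f 0)"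
proof -
  obtain C where "\<forall>z\<in>unit_disc. (1 - (cmod z)^2) powr \<alpha> * cmod (deriv f z) \<le> C"
    using assms(1) unfolding bloch_space_def by blast
  then have "(1 - cmod w ^ 2) powr \<alpha> * cmod (deriv f w)
      \<le> (SUP z\<in>unit_disc. (1 - (cmod z)^2) powr \<alpha> * cmod (deriv f z))"
    by (intro cSUP_upper[OF assms(2)] bdd_aboveI2[where M=C]) blast
  then show ?thesis unfolding bloch_norm_def by simp
qed

lemma norm_at_0_le_bloch_norm:
  assumes "f \<in> bloch_space \<alpha>"
  shows "cmod (f 0) \<le> bloch_norm \<alpha> f"
proof -
  have "cmod (deriv f 0) \<le> bloch_norm \<alpha> f - cmod (f 0)"
    using weighted_deriv_le_bloch_norm[OF assms, of 0] by simp
  then show ?thesis using norm_ge_zero[of "deriv f 0"] by linarith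
qed

lemma bloch_norm_nonneg: "f \<in> bloch_space \<alpha> \<Longrightarrow> 0 \<le> bloch_norm \<alpha> f"
  using norm_at_0_le_bloch_norm norm_ge_zero order_trans by blast

lemma norm_deriv_le_bloch_norm:
  assumes "f \<in> bloch_space \<alpha>" "w \<in> unit_disc"
  shows "cmod (deriv f w) \<le> 2 powr \<bar>\<alpha>\<bar> * bloch_norm \<alpha> f * (1 - cmod w) powr (-\<alpha>)"
proof -
  have "(1 - cmod w ^ 2) powr \<alpha> * cmod (deriv f w) \<le> bloch_norm \<alpha> f"
    using weighted_deriv_le_bloch_norm[OF assms] norm_ge_zero[of "f 0"] by linarith
  from growth_le_of_weighted_le[OF _ norm_ge_zero this] assms(2) show ?thesis
    by (simp add: mult_ac)
qed

lemma norm_higher_deriv_le_bloch_norm: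
  assumes f: "f \<in> bloch_space \<alpha>" and \<alpha>: "\<alpha> \<ge> 0" and k: "k \<ge> 1" and w: "w \<in> unit_disc"
  shows "cmod ((deriv ^^ k) f w) \<le> fact (k - 1) * 2 powr \<alpha> * 2 powr (\<alpha> + real k - 1)
           * bloch_norm \<alpha> f * (1 - cmod w) powr (-(\<alpha> + real k - 1))"
proof -
  have f': "deriv f holomorphic_on unit_disc"
    using holomorphic_deriv[OF bloch_space_imp_holomorphic[OF f] open_unit_disc] .
  have "(deriv ^^ k) f = (deriv ^^ (k - 1)) (deriv f)"
    using k by (metis Suc_diff_le diff_Suc_1 funpow_Suc_right o_apply)
  moreover have "cmod ((deriv ^^ (k - 1)) (deriv f) w) \<le> fact (k - 1) * (2 powr \<alpha> * bloch_norm \<alpha> f)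
      * 2 powr (\<alpha> + real (k - 1)) * (1 - cmod w) powr (-(\<alpha> + real (k - 1)))"
    by (rule norm_higher_deriv_le_growth[OF f' \<alpha> _ w]) (use norm_deriv_le_bloch_norm[OF f] \<alpha> in simp)
  moreover have "real (k - 1) = real k - 1" using k by simp
  ultimately show ?thesis by (simp add: mult_ac add_diff_eq)
qed

lemma bloch_norm_cong:
  assumes "\<And>z. z \<in> unit_disc \<Longrightarrow> f z = h z"
  shows "bloch_norm \<alpha> f = bloch_norm \<alpha> h"
proof -
  have "deriv f z = deriv h z" if "z \<in> unit_disc" for z
    by (rule deriv_cong_ev[OF _ refl])
       (use eventually_nhds_in_open[OF open_unit_disc that] assms in \<open>auto elim!: eventually_mono\<close>)
  then show ?thesis unfolding bloch_norm_def using assms[of 0] by simp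
qed

lemma bloch_space_diff:
  assumes f: "f \<in> bloch_space \<alpha>" and h: "h \<in> bloch_space \<alpha>"
  shows "(\<lambda>z. f z - h z) \<in> bloch_space \<alpha>"
proof -
  have "(1 - cmod z ^ 2) powr \<alpha> * cmod (deriv (\<lambda>z. f z - h z) z)
      \<le> bloch_norm \<alpha> f + bloch_norm \<alpha> h" if z: "z \<in> unit_disc" for z
  proof -
    have "(1 - cmod z ^ 2) powr \<alpha> * cmod (deriv (\<lambda>z. f z - h z) z)
        \<le> (1 - cmod z ^ 2) powr \<alpha> * cmod (deriv f z) + (1 - cmod z ^ 2) powr \<alpha> * cmod (deriv h z)"
      unfolding deriv_diff_unit_disc[OF bloch_space_imp_holomorphic[OF f] bloch_space_imp_holomorphic[OF h] z]
      by (metis distrib_left mult_left_mono norm_triangle_ineq4 powr_ge_zero)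
    then show ?thesis
      using weighted_deriv_le_bloch_norm[OF f z] weighted_deriv_le_bloch_norm[OF h z]
        norm_ge_zero[of "f 0"] norm_ge_zero[of "h 0"] by linarith
  qed
  moreover have "(\<lambda>z. f z - h z) holomorphic_on unit_disc"
    using f h by (intro holomorphic_intros bloch_space_imp_holomorphic)
  ultimately show ?thesis unfolding bloch_space_def by blast
qed

lemma deriv_tendsto_of_bloch_norm_tendsto:
  assumes f: "\<And>j. f j \<in> bloch_space \<beta>" and h: "h \<in> bloch_space \<beta>"
    and lim: "(\<lambda>j. bloch_norm \<beta> (\<lambda>z. f j z - h z)) \<longlonglongrightarrow> 0" and w: "w \<in> unit_disc"
  shows "(\<lambda>j. deriv (f j) w) \<longlonglongrightarrow> deriv h w"
proof -
  have pos: "(1 - cmod w ^ 2) powr \<beta> > 0" using one_minus_norm_sq_pos[of w] w by simp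
  have bound: "norm (deriv (f j) w - deriv h w) \<le> bloch_norm \<beta> (\<lambda>z. f j z - h z) / (1 - cmod w ^ 2) powr \<beta>"
    for j
  proof -
    have "(1 - cmod w ^ 2) powr \<beta> * cmod (deriv (\<lambda>z. f j z - h z) w) \<le> bloch_norm \<beta> (\<lambda>z. f j z - h z)"
      using weighted_deriv_le_bloch_norm[OF bloch_space_diff[OF f[of j] h] w] norm_ge_zero[of "f j 0 - h 0"]
      by linarith
    then show ?thesis
      using pos deriv_diff_unit_disc[OF bloch_space_imp_holomorphic[OF f[of j]] bloch_space_imp_holomorphic[OF h] w]
      by (simp add: pos_le_divide_eq mult.commute)
  qed
  have "(\<lambda>j. deriv (f j) w - deriv h w) \<longlonglongrightarrow> 0"
    by (rule Lim_null_comparison[OF always_eventually[OF allI[OF bound]] tendsto_divide_zero[OF lim]])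
  then show ?thesis by (simp add: LIM_zero_iff)
qed

lemma holomorphic_on_Ignk_integrand:
  assumes "f holomorphic_on unit_disc" "g holomorphic_on unit_disc"
  shows "(\<lambda>z. (deriv ^^ k) f z * g z) holomorphic_on unit_disc"
  by (intro holomorphic_on_mult holomorphic_higher_deriv[OF assms(1) open_unit_disc] assms(2))

lemma deriv_Ignk:
  assumes "f holomorphic_on unit_disc" "g holomorphic_on unit_disc" "n \<ge> 1" "w \<in> unit_disc"
  shows "deriv (Ignk g n k f) w = (integ_op ^^ (n - 1)) (\<lambda>z. (deriv ^^ k) f z * g z) w"
  using deriv_integ_op_iterate_Suc[OF holomorphic_on_Ignk_integrand[OF assms(1,2)] assms(4), of "n - 1"]
    assms(3) unfolding Ignk_def by simp

lemma integ_op_iterate_bloch: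
  assumes u: "u holomorphic_on unit_disc" and M: "M \<ge> 0" and \<beta>: "\<beta> > 0" and n: "n \<ge> 1"
    and bound: "\<And>w. w \<in> unit_disc \<Longrightarrow> cmod (u w) \<le> M * (1 - cmod w) powr (-(real n - 1 + \<beta>))"
  shows "(integ_op ^^ n) u \<in> bloch_space \<beta>"
    and "bloch_norm \<beta> ((integ_op ^^ n) u) \<le> 2 powr \<beta> * integ_growth_const (real n - 1 + \<beta>) (n - 1) * M"
proof -
  define K where "K = integ_growth_const (real n - 1 + \<beta>) (n - 1)"
  have n': "n = Suc (n - 1)" using n by simp
  have weighted: "(1 - cmod w ^ 2) powr \<beta> * cmod (deriv ((integ_op ^^ n) u) w) \<le> 2 powr \<beta> * K * M"
    if w: "w \<in> unit_disc" for w
  proof -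
    have "cmod ((integ_op ^^ (n - 1)) u w) \<le> K * M * (1 - cmod w) powr (-(real n - 1 + \<beta> - real (n - 1)))"
      unfolding K_def by (rule norm_integ_op_iterate_le_growth[OF u M _ bound w]) (use \<beta> n in auto)
    then have deriv_le: "cmod (deriv ((integ_op ^^ n) u) w) \<le> K * M * (1 - cmod w) powr (-\<beta>)"
      using deriv_integ_op_iterate_Suc[OF u w, of "n - 1"] n' n by (simp add: of_nat_diff)
    have "(1 - cmod w ^ 2) powr \<beta> * cmod (deriv ((integ_op ^^ n) u) w)
        \<le> (2 powr \<beta> * (1 - cmod w) powr \<beta>) * (K * M * (1 - cmod w) powr (-\<beta>))"
      by (rule mult_mono) (use one_minus_norm_sq_powr_le[of w \<beta>] w \<beta> deriv_le in auto)
    also have "\<dots> = 2 powr \<beta> * K * M * ((1 - cmod w) powr \<beta> * (1 - cmod w) powr (-\<beta>))"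
      by (simp add: mult_ac)
    also have "(1 - cmod w) powr \<beta> * (1 - cmod w) powr (-\<beta>) = 1"
      using w by (simp add: powr_add[symmetric])
    finally show ?thesis by simp
  qed
  show "(integ_op ^^ n) u \<in> bloch_space \<beta>"
    unfolding bloch_space_def using holomorphic_on_integ_op_iterate[OF u] weighted by blast
  show "bloch_norm \<beta> ((integ_op ^^ n) u) \<le> 2 powr \<beta> * K * M"
    using bloch_norm_le[OF weighted] integ_op_iterate_Suc_at_0[of "n - 1" u] n' by simp
qed

text \<open>The derivative of \<open>I\<^sub>g\<^sup>n\<^sup>,\<^sup>k f\<close> is \<open>I\<^sup>n\<^sup>-\<^sup>1(f\<^sup>(\<^sup>k\<^sup>) g)\<close>; differentiating it \<open>n - 1\<close> more times at \<open>a\<close>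
  gives back \<open>f\<^sup>(\<^sup>k\<^sup>)(a) g(a)\<close>, which the Cauchy estimates control.\<close>

lemma norm_Ignk_integrand_le_bloch_norm:
  assumes f: "f holomorphic_on unit_disc" and g: "g holomorphic_on unit_disc"
    and \<beta>: "\<beta> \<ge> 0" and n: "n \<ge> 1" and F: "F \<in> bloch_space \<beta>"
    and dF: "\<And>w. w \<in> unit_disc \<Longrightarrow> deriv F w = deriv (Ignk g n k f) w" and a: "a \<in> unit_disc"
  shows "cmod ((deriv ^^ k) f a * g a) \<le> fact (n - 1) * (2 powr \<beta> * bloch_norm \<beta> F)
           * 4 powr (\<beta> + real (n - 1)) * (1 - cmod a ^ 2) powr (-(\<beta> + real (n - 1)))"
proof -
  have "cmod ((integ_op ^^ (n - 1)) (\<lambda>z. (deriv ^^ k) f z * g z) w)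
      \<le> 2 powr \<beta> * bloch_norm \<beta> F * (1 - cmod w) powr (-\<beta>)" if w: "w \<in> unit_disc" for w
    using norm_deriv_le_bloch_norm[OF F w] \<beta> dF[OF w] deriv_Ignk[OF f g n w] by simp
  from norm_le_of_integ_op_iterate_growth[OF holomorphic_on_Ignk_integrand[OF f g] \<beta> _ this a]
  show ?thesis using bloch_norm_nonneg[OF F] by simp
qed

section \<open>Test functions\<close>

lemma has_field_derivative_inverse_power:
  fixes b z :: complex
  assumes nz: "1 - b * z \<noteq> 0"
  shows "((\<lambda>w. inverse ((1 - b * w) ^ N)) has_field_derivative
            (of_nat N * b * inverse ((1 - b * z) ^ Suc N))) (at z)"
proof -
  have "((\<lambda>w. 1 - b * w) has_field_derivative (0 - b * 1)) (at z)"
    by (intro DERIV_diff DERIV_const DERIV_cmult DERIV_ident)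
  from DERIV_inverse'[OF DERIV_power[OF this, of N]] nz
  have "((\<lambda>w. inverse ((1 - b * w) ^ N)) has_field_derivative
     - (inverse ((1 - b * z) ^ N) * (of_nat N * ((0 - b * 1) * (1 - b * z) ^ (N - Suc 0)))
       * inverse ((1 - b * z) ^ N))) (at z)"
    by simp
  also have "- (inverse ((1 - b * z) ^ N) * (of_nat N * ((0 - b * 1) * (1 - b * z) ^ (N - Suc 0)))
      * inverse ((1 - b * z) ^ N)) = of_nat N * b * inverse ((1 - b * z) ^ Suc N)"
  proof (cases N)
    case (Suc N')
    have "- (inverse (p ^ Suc N') * (of_nat (Suc N') * ((0 - b * 1) * p ^ N')) * inverse (p ^ Suc N'))
       = of_nat (Suc N') * b * inverse (p ^ Suc (Suc N'))" if "p \<noteq> 0" for p :: complex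
      using that by (simp add: field_simps)
    then show ?thesis using nz Suc by simp
  qed simp
  finally show ?thesis .
qed

lemma higher_deriv_inverse_power:
  fixes b c z :: complex
  assumes "b * z \<noteq> 1"
  shows "(deriv ^^ k) (\<lambda>w. c * inverse ((1 - b * w) ^ m)) z
       = c * pochhammer (of_nat m) k * b ^ k * inverse ((1 - b * z) ^ (m + k))"
  using assms
proof (induction k arbitrary: z)
  case 0 then show ?case by simp
next
  case (Suc k)
  have op: "open {w. b * w \<noteq> 1}"
    by (rule open_Collect_neq) (auto intro!: continuous_intros)
  have ev: "\<forall>\<^sub>F w in nhds z. b * w \<noteq> 1"
    using eventually_nhds_in_open[OF op] Suc.prems by auto
  have "(deriv ^^ Suc k) (\<lambda>w. c * inverse ((1 - b * w) ^ m)) z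
      = deriv (\<lambda>w. c * pochhammer (of_nat m) k * b ^ k * inverse ((1 - b * w) ^ (m + k))) z"
    unfolding funpow.simps comp_def
    by (rule deriv_cong_ev[OF _ refl]) (use ev Suc.IH in \<open>auto elim!: eventually_mono\<close>)
  also have "\<dots> = c * pochhammer (of_nat m) (Suc k) * b ^ Suc k * inverse ((1 - b * z) ^ (m + Suc k))"
  proof (rule DERIV_imp_deriv)
    have "1 - b * z \<noteq> 0" using Suc.prems by auto
    from DERIV_cmult[OF has_field_derivative_inverse_power[OF this, of "m + k"],
        of "c * pochhammer (of_nat m) k * b ^ k"]
    show "((\<lambda>w. c * pochhammer (of_nat m) k * b ^ k * inverse ((1 - b * w) ^ (m + k)))
        has_field_derivative c * pochhammer (of_nat m) (Suc k) * b ^ Suc k * inverse ((1 - b * z) ^ (m + Suc k))) (at z)"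
      by (simp add: pochhammer_rec' mult_ac)
  qed
  finally show ?case .
qed

definition test_exponent :: "real \<Rightarrow> nat" where
  "test_exponent \<alpha> = nat \<lceil>\<alpha>\<rceil>"

text \<open>The normalisation makes \<open>\<parallel>f\<^sub>a\<parallel>\<^sub>\<alpha>\<close> bounded uniformly in \<open>a\<close>, while for \<open>|a| \<ge> 1/2\<close> the value
  \<open>|f\<^sub>a\<^sup>(\<^sup>k\<^sup>)(a)|\<close> is comparable to \<open>(1 - |a|\<^sup>2)\<^sup>1\<^sup>-\<^sup>\<alpha>\<^sup>-\<^sup>k\<close>.\<close>

definition test_fn :: "real \<Rightarrow> complex \<Rightarrow> complex \<Rightarrow> complex" where
  "test_fn \<alpha> a = (\<lambda>w. of_real ((1 - cmod a ^ 2) powr (real (test_exponent \<alpha>) + 1 - \<alpha>))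
                        * inverse ((1 - cnj a * w) ^ test_exponent \<alpha>))"

lemma test_exponent_ge:
  assumes "\<alpha> > 0"
  shows "real (test_exponent \<alpha>) \<ge> \<alpha>" and "test_exponent \<alpha> \<ge> 1"
  using assms by (auto simp: test_exponent_def le_nat_iff one_le_ceiling)

lemma cnj_mult_neq_1:
  assumes "cmod a < 1" "cmod w < 1"
  shows "cnj a * w \<noteq> 1"
proof -
  have "cmod a * cmod w \<le> cmod a" using assms by (simp add: mult_left_le)
  then have "cmod (cnj a * w) < 1" using assms by (simp add: norm_mult)
  then show ?thesis by auto
qed

lemma one_minus_norm_sq_le_norm_one_minus_cnj_mult:
  assumes "cmod a < 1" "cmod w < 1"
  shows "1 - cmod a ^ 2 \<le> 2 * cmod (1 - cnj a * w)"
proof -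
  have "1 - cmod a * cmod w \<le> cmod (1 - cnj a * w)"
    using norm_triangle_ineq2[of 1 "cnj a * w"] by (simp add: norm_mult)
  moreover have "cmod a * cmod w \<le> cmod a" using assms by (simp add: mult_left_le)
  moreover have "(1 - cmod a) * (1 + cmod a) \<le> (1 - cmod a) * 2"
    using assms by (intro mult_left_mono) auto
  ultimately show ?thesis by (simp add: power2_eq_square algebra_simps)
qed

lemma norm_one_minus_cnj_mult_commute: "cmod (1 - cnj w * a) = cmod (1 - cnj a * w)"
proof -
  have "1 - cnj w * a = cnj (1 - cnj a * w)" by (simp add: mult.commute)
  then show ?thesis by (simp only: complex_mod_cnj)
qed

lemma holomorphic_on_test_fn: "a \<in> unit_disc \<Longrightarrow> test_fn \<alpha> a holomorphic_on unit_disc"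
  unfolding test_fn_def by (intro holomorphic_intros) (use cnj_mult_neq_1 in force)

lemma higher_deriv_test_fn:
  assumes "a \<in> unit_disc" "w \<in> unit_disc"
  shows "(deriv ^^ k) (test_fn \<alpha> a) w
       = of_real ((1 - cmod a ^ 2) powr (real (test_exponent \<alpha>) + 1 - \<alpha>))
         * pochhammer (of_nat (test_exponent \<alpha>)) k * cnj a ^ k
         * inverse ((1 - cnj a * w) ^ (test_exponent \<alpha> + k))"
  unfolding test_fn_def by (rule higher_deriv_inverse_power) (use cnj_mult_neq_1 assms in force)

lemma norm_pochhammer_of_nat: "cmod (pochhammer (of_nat m) k) = pochhammer (real m) k"
  by (simp add: pochhammer_of_nat)

lemma weighted_deriv_test_fn_le:
  assumes \<alpha>: "\<alpha> > 0" and a: "a \<in> unit_disc" and w: "w \<in> unit_disc"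
  shows "(1 - cmod w ^ 2) powr \<alpha> * cmod (deriv (test_fn \<alpha> a) w)
           \<le> real (test_exponent \<alpha>) * 2 ^ (test_exponent \<alpha> + 1)"
proof -
  define m where "m = test_exponent \<alpha>"
  define t where "t = real m + 1 - \<alpha>"
  define q where "q = cmod (1 - cnj a * w)"
  have t: "t > 0" using test_exponent_ge(1)[OF \<alpha>] by (simp add: t_def m_def)
  have q: "q > 0" using cnj_mult_neq_1[of a w] a w by (simp add: q_def)
  have "cmod (deriv (test_fn \<alpha> a) w) = (1 - cmod a ^ 2) powr t * real m * cmod a / q ^ (m + 1)"
    using higher_deriv_test_fn[OF a w, of 1 \<alpha>] norm_pochhammer_of_nat[of m 1]
    by (simp add: norm_mult norm_inverse norm_power divide_inverse m_def t_def q_def)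
  also have "\<dots> \<le> (2 * q) powr t * real m * 1 / q ^ (m + 1)"
    using one_minus_norm_sq_le_norm_one_minus_cnj_mult[of a w] one_minus_norm_sq_pos[of a] a w t q
    by (intro divide_right_mono mult_mono powr_mono2) (auto simp: q_def)
  finally have bound: "(1 - cmod w ^ 2) powr \<alpha> * cmod (deriv (test_fn \<alpha> a) w)
      \<le> (2 * q) powr \<alpha> * ((2 * q) powr t * real m / q ^ (m + 1))"
    using one_minus_norm_sq_le_norm_one_minus_cnj_mult[of w a] one_minus_norm_sq_pos[of w] a w \<alpha>
    by (intro mult_mono powr_mono2) (auto simp: q_def norm_one_minus_cnj_mult_commute)
  have "(2 * q) powr \<alpha> * (2 * q) powr t = (2 * q) ^ (m + 1)"
  proof -
    have "(2 * q) powr \<alpha> * (2 * q) powr t = (2 * q) powr real (m + 1)"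
      by (simp add: t_def powr_add[symmetric] add_ac)
    then show ?thesis using powr_realpow[of "2 * q" "m + 1"] q by simp
  qed
  then have "(2 * q) powr \<alpha> * ((2 * q) powr t * real m / q ^ (m + 1)) = real m * 2 ^ (m + 1)"
    using q by (simp add: power_mult_distrib field_simps)
  with bound show ?thesis unfolding m_def by simp
qed

lemma test_fn_bloch:
  assumes \<alpha>: "\<alpha> > 0" and a: "a \<in> unit_disc"
  shows "test_fn \<alpha> a \<in> bloch_space \<alpha>"
    and "bloch_norm \<alpha> (test_fn \<alpha> a) \<le> 1 + real (test_exponent \<alpha>) * 2 ^ (test_exponent \<alpha> + 1)"
proof -
  show "test_fn \<alpha> a \<in> bloch_space \<alpha>"
    unfolding bloch_space_def using holomorphic_on_test_fn[OF a] weighted_deriv_test_fn_le[OF \<alpha> a] by blast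
  have "cmod (test_fn \<alpha> a 0) = (1 - cmod a ^ 2) powr (real (test_exponent \<alpha>) + 1 - \<alpha>)"
    by (simp add: test_fn_def)
  also have "\<dots> \<le> 1"
    using one_minus_norm_sq_pos[of a] a test_exponent_ge(1)[OF \<alpha>] by (intro powr_le1) auto
  finally show "bloch_norm \<alpha> (test_fn \<alpha> a) \<le> 1 + real (test_exponent \<alpha>) * 2 ^ (test_exponent \<alpha> + 1)"
    using bloch_norm_le[OF weighted_deriv_test_fn_le[OF \<alpha> a]] by simp
qed

lemma norm_higher_deriv_test_fn_at_center:
  assumes a: "a \<in> unit_disc"
  shows "cmod ((deriv ^^ k) (test_fn \<alpha> a) a)
       = pochhammer (real (test_exponent \<alpha>)) k * cmod a ^ k * (1 - cmod a ^ 2) powr (1 - \<alpha> - real k)"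
proof -
  define m where "m = test_exponent \<alpha>"
  define l where "l = 1 - cmod a ^ 2"
  have l: "l > 0" using one_minus_norm_sq_pos[of a] a by (simp add: l_def)
  have e: "1 - cnj a * a = of_real l"
    unfolding l_def using complex_norm_square[of a] by (simp add: mult.commute)
  have "cmod ((deriv ^^ k) (test_fn \<alpha> a) a)
      = pochhammer (real m) k * cmod a ^ k * (l powr (real m + 1 - \<alpha>) / l ^ (m + k))"
    using higher_deriv_test_fn[OF a a, of k \<alpha>, folded m_def l_def, unfolded e] l
    by (simp add: norm_mult norm_inverse norm_power norm_pochhammer_of_nat divide_inverse)
  also have "l powr (real m + 1 - \<alpha>) / l ^ (m + k) = l powr (real m + 1 - \<alpha> - real (m + k))"
    by (simp only: powr_realpow[OF l, symmetric] powr_diff)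
  also have "real m + 1 - \<alpha> - real (m + k) = 1 - \<alpha> - real k" by simp
  finally show ?thesis unfolding m_def l_def .
qed

lemma norm_higher_deriv_test_fn_le:
  assumes \<alpha>: "\<alpha> > 0" and a: "a \<in> unit_disc" and r: "r < 1" and z: "cmod z \<le> r"
  shows "cmod ((deriv ^^ k) (test_fn \<alpha> a) z)
     \<le> (1 - cmod a ^ 2) powr (real (test_exponent \<alpha>) + 1 - \<alpha>)
         * pochhammer (real (test_exponent \<alpha>)) k / (1 - r) ^ (test_exponent \<alpha> + k)"
proof -
  define m where "m = test_exponent \<alpha>"
  define L where "L = (1 - cmod a ^ 2) powr (real m + 1 - \<alpha>) * pochhammer (real m) k"
  have L: "L \<ge> 0" unfolding L_def by (simp add: pochhammer_of_nat)
  have q: "1 - r \<le> cmod (1 - cnj a * z)"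
  proof -
    have "1 - cmod a * cmod z \<le> cmod (1 - cnj a * z)"
      using norm_triangle_ineq2[of 1 "cnj a * z"] by (simp add: norm_mult)
    moreover have "cmod a * cmod z \<le> cmod z" using a by (simp add: mult_left_le_one_le)
    ultimately show ?thesis using z by argo
  qed
  have "cmod ((deriv ^^ k) (test_fn \<alpha> a) z) = L * cmod a ^ k / cmod (1 - cnj a * z) ^ (m + k)"
    using higher_deriv_test_fn[OF a, of z k \<alpha>] norm_pochhammer_of_nat[of m k] z r
    by (simp add: norm_mult norm_inverse norm_power divide_inverse m_def L_def)
  also have "\<dots> \<le> L * 1 / (1 - r) ^ (m + k)"
    using L a q r by (intro frac_le mult_left_mono power_mono) (auto simp: power_le_one)
  finally show ?thesis unfolding L_def m_def by simp
qed

lemma deriv_Ignk_test_fn_tendsto_0: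
  assumes \<alpha>: "\<alpha> > 0" and n: "n \<ge> 1" and g: "g holomorphic_on unit_disc"
    and a: "\<And>j. a j \<in> unit_disc" and lim: "(\<lambda>j. cmod (a j)) \<longlonglongrightarrow> 1" and w: "w \<in> unit_disc"
  shows "(\<lambda>j. deriv (Ignk g n k (test_fn \<alpha> (a j))) w) \<longlonglongrightarrow> 0"
proof -
  define m where "m = test_exponent \<alpha>"
  define t where "t = real m + 1 - \<alpha>"
  have r: "cmod w < 1" using w by simp
  have t: "t > 0" using test_exponent_ge(1)[OF \<alpha>] by (simp add: t_def m_def)
  have "continuous_on (cball 0 (cmod w)) (\<lambda>z. cmod (g z))"
    by (intro continuous_intros holomorphic_on_imp_continuous_on
          holomorphic_on_subset[OF g cball_0_subset_unit_disc[OF r]])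
  then obtain G where G: "\<And>z. cmod z \<le> cmod w \<Longrightarrow> cmod (g z) \<le> G"
    using continuous_on_cball_bounded_above by blast
  define c where "c = pochhammer (real m) k / (1 - cmod w) ^ (m + k) * max G 0"
  have bound: "norm (deriv (Ignk g n k (test_fn \<alpha> (a j))) w) \<le> (1 - cmod (a j) ^ 2) powr t * c" for j
  proof -
    have "cmod ((deriv ^^ k) (test_fn \<alpha> (a j)) z * g z) \<le> (1 - cmod (a j) ^ 2) powr t * c"
      if "cmod z \<le> cmod w" for z
      unfolding norm_mult c_def mult.assoc[symmetric]
      using norm_higher_deriv_test_fn_le[OF \<alpha> a r that, of k] G[OF that] r
      by (intro mult_mono) (auto simp: m_def t_def pochhammer_of_nat)
    then have "cmod ((integ_op ^^ (n - 1)) (\<lambda>z. (deriv ^^ k) (test_fn \<alpha> (a j)) z * g z) w)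
        \<le> (1 - cmod (a j) ^ 2) powr t * c"
      by (rule norm_integ_op_iterate_le[OF holomorphic_on_Ignk_integrand[OF holomorphic_on_test_fn[OF a] g] r
            _ order_refl])
    then show ?thesis using deriv_Ignk[OF holomorphic_on_test_fn[OF a] g n w] by simp
  qed
  have "(\<lambda>j. 1 - cmod (a j) ^ 2) \<longlonglongrightarrow> 0"
    using tendsto_diff[OF tendsto_const tendsto_power[OF lim, of 2], of 1] by simp
  moreover have "0 \<le> 1 - cmod (a j) ^ 2" for j using one_minus_norm_sq_pos[of "a j"] a[of j] by simp
  ultimately have "(\<lambda>j. (1 - cmod (a j) ^ 2) powr t) \<longlonglongrightarrow> 0"
    by (intro tendsto_zero_powrI[OF _ tendsto_const _ t] always_eventually allI)
  from tendsto_mult_left_zero[OF this, of c]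
  show ?thesis by (rule Lim_null_comparison[OF always_eventually[OF allI[OF bound]]])
qed

section \<open>Boundedness\<close>

lemma bounded_bloch_op_Ignk:
  assumes \<alpha>: "\<alpha> > 0" and \<beta>: "\<beta> > 0" and n: "n \<ge> 1" and k: "k \<ge> 1"
    and g: "g holomorphic_on unit_disc"
    and C: "\<forall>z\<in>unit_disc. (1 - cmod z ^ 2) powr (real n - real k + \<beta> - \<alpha>) * cmod (g z) \<le> C"
  shows "bounded_bloch_op \<alpha> \<beta> (Ignk g n k)"
proof -
  define s where "s = real n - real k + \<beta> - \<alpha>"
  define A where "A = fact (k - 1) * 2 powr \<alpha> * 2 powr (\<alpha> + real k - 1)"
  define K where "K = 2 powr \<beta> * integ_growth_const (real n - 1 + \<beta>) (n - 1) * A * C * 2 powr \<bar>s\<bar>"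
  have "cmod (g 0) \<le> C" using C[rule_format, of 0] by simp
  then have C0: "C \<ge> 0" using norm_ge_zero order_trans by blast
  have "Ignk g n k f \<in> bloch_space \<beta> \<and> bloch_norm \<beta> (Ignk g n k f) \<le> K * bloch_norm \<alpha> f"
    if f: "f \<in> bloch_space \<alpha>" for f
  proof -
    define M where "M = A * bloch_norm \<alpha> f * C * 2 powr \<bar>s\<bar>"
    have M0: "0 \<le> M" using C0 bloch_norm_nonneg[OF f] by (simp add: M_def A_def)
    have "cmod ((deriv ^^ k) f w * g w) \<le> M * (1 - cmod w) powr (-(real n - 1 + \<beta>))"
      if w: "w \<in> unit_disc" for w
    proof -
      have Cw: "(1 - cmod w ^ 2) powr s * cmod (g w) \<le> C" using C w unfolding s_def by blast
      have A0: "0 \<le> A * bloch_norm \<alpha> f" using bloch_norm_nonneg[OF f] by (simp add: A_def)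
      have "cmod ((deriv ^^ k) f w * g w) \<le> M * (1 - cmod w) powr (-(\<alpha> + real k - 1 + s))"
        unfolding M_def
        using norm_mult_le_growth[OF _ norm_higher_deriv_le_bloch_norm[OF f _ k w, folded A_def] A0 Cw]
          w \<alpha> by simp
      also have "\<alpha> + real k - 1 + s = real n - 1 + \<beta>" unfolding s_def by simp
      finally show ?thesis .
    qed
    from integ_op_iterate_bloch[OF holomorphic_on_Ignk_integrand[OF bloch_space_imp_holomorphic[OF f] g]
        M0 \<beta> n this]
    show ?thesis unfolding Ignk_def K_def M_def by (simp add: ac_simps)
  qed
  then show ?thesis unfolding bounded_bloch_op_def by blast
qed

lemma weighted_norm_le_of_Ignk_test_fn:
  assumes \<alpha>: "\<alpha> > 0" and \<beta>: "\<beta> > 0" and n: "n \<ge> 1" and g: "g holomorphic_on unit_disc"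
  obtains K where "K \<ge> 0"
    and "\<And>a F. a \<in> unit_disc \<Longrightarrow> 1/2 \<le> cmod a \<Longrightarrow> F \<in> bloch_space \<beta> \<Longrightarrow>
      (\<And>w. w \<in> unit_disc \<Longrightarrow> deriv F w = deriv (Ignk g n k (test_fn \<alpha> a)) w) \<Longrightarrow>
      (1 - cmod a ^ 2) powr (real n - real k + \<beta> - \<alpha>) * cmod (g a) \<le> K * bloch_norm \<beta> F"
proof -
  define P where "P = pochhammer (real (test_exponent \<alpha>)) k"
  define B where "B = \<beta> + real (n - 1)"
  define K where "K = fact (n - 1) * 2 powr \<beta> * 4 powr B * 2 ^ k / P"
  have P: "P > 0" unfolding P_def using test_exponent_ge(2)[OF \<alpha>] by (intro pochhammer_pos) simp
  have "(1 - cmod a ^ 2) powr (real n - real k + \<beta> - \<alpha>) * cmod (g a) \<le> K * bloch_norm \<beta> F"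
    if a: "a \<in> unit_disc" and a_half: "1/2 \<le> cmod a" and F: "F \<in> bloch_space \<beta>"
      and dF: "\<And>w. w \<in> unit_disc \<Longrightarrow> deriv F w = deriv (Ignk g n k (test_fn \<alpha> a)) w" for a F
  proof -
    define l where "l = 1 - cmod a ^ 2"
    define X where "X = cmod ((deriv ^^ k) (test_fn \<alpha> a) a * g a)"
    define S where "S = bloch_norm \<beta> F"
    have l: "l > 0" using one_minus_norm_sq_pos[of a] a by (simp add: l_def)
    have upper: "X \<le> fact (n - 1) * (2 powr \<beta> * S) * 4 powr B * l powr (-B)"
      using norm_Ignk_integrand_le_bloch_norm[OF holomorphic_on_test_fn[OF a] g _ n F dF a] \<beta>
      unfolding X_def B_def l_def S_def by simp
    have "P * (1/2) ^ k * l powr (1 - \<alpha> - real k) \<le> P * cmod a ^ k * l powr (1 - \<alpha> - real k)"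
      using a_half P by (intro mult_right_mono mult_left_mono power_mono) auto
    then have "P * (1/2) ^ k * l powr (1 - \<alpha> - real k) \<le> cmod ((deriv ^^ k) (test_fn \<alpha> a) a)"
      unfolding norm_higher_deriv_test_fn_at_center[OF a] P_def l_def .
    then have lower: "P * (1/2) ^ k * (l powr (1 - \<alpha> - real k) * cmod (g a)) \<le> X"
      unfolding X_def norm_mult mult.assoc[symmetric] by (rule mult_right_mono) simp
    have "l powr (real n - real k + \<beta> - \<alpha>) * cmod (g a) = l powr B * (l powr (1 - \<alpha> - real k) * cmod (g a))"
      using l n by (simp add: B_def powr_add[symmetric] of_nat_diff algebra_simps)
    also have "\<dots> \<le> l powr B * (X / (P * (1/2) ^ k))"
      using lower P by (intro mult_left_mono) (simp_all add: field_simps)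
    also have "\<dots> \<le> l powr B * (fact (n - 1) * (2 powr \<beta> * S) * 4 powr B * l powr (-B) / (P * (1/2) ^ k))"
      using upper P by (intro mult_left_mono divide_right_mono) auto
    also have "\<dots> = K * S"
      using l P by (simp add: K_def powr_minus field_simps power_one_over)
    finally show ?thesis unfolding l_def S_def .
  qed
  moreover have "K \<ge> 0" unfolding K_def using P by simp
  ultimately show ?thesis using that by blast
qed

lemma weight_bounded_of_bounded_bloch_op_Ignk:
  assumes \<alpha>: "\<alpha> > 0" and \<beta>: "\<beta> > 0" and n: "n \<ge> 1" and g: "g holomorphic_on unit_disc"
    and T: "bounded_bloch_op \<alpha> \<beta> (Ignk g n k)"
  shows "\<exists>C. \<forall>z\<in>unit_disc. (1 - cmod z ^ 2) powr (real n - real k + \<beta> - \<alpha>) * cmod (g z) \<le> C"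
proof -
  define s where "s = real n - real k + \<beta> - \<alpha>"
  define B where "B = 1 + real (test_exponent \<alpha>) * 2 ^ (test_exponent \<alpha> + 1)"
  obtain C where maps: "\<And>f. f \<in> bloch_space \<alpha> \<Longrightarrow> Ignk g n k f \<in> bloch_space \<beta>"
    and C: "\<And>f. f \<in> bloch_space \<alpha> \<Longrightarrow> bloch_norm \<beta> (Ignk g n k f) \<le> C * bloch_norm \<alpha> f"
    using T unfolding bounded_bloch_op_def by blast
  obtain K where K0: "K \<ge> 0" and K: "\<And>a F. a \<in> unit_disc \<Longrightarrow> 1/2 \<le> cmod a \<Longrightarrow> F \<in> bloch_space \<beta> \<Longrightarrow>
      (\<And>w. w \<in> unit_disc \<Longrightarrow> deriv F w = deriv (Ignk g n k (test_fn \<alpha> a)) w) \<Longrightarrow>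
      (1 - cmod a ^ 2) powr s * cmod (g a) \<le> K * bloch_norm \<beta> F"
    using weighted_norm_le_of_Ignk_test_fn[OF \<alpha> \<beta> n g] unfolding s_def by metis
  have outer: "(1 - cmod a ^ 2) powr s * cmod (g a) \<le> K * (max C 0 * B)"
    if a: "a \<in> unit_disc" "1/2 \<le> cmod a" for a
  proof -
    have f: "test_fn \<alpha> a \<in> bloch_space \<alpha>" and f_norm: "bloch_norm \<alpha> (test_fn \<alpha> a) \<le> B"
      using test_fn_bloch[OF \<alpha> a(1)] unfolding B_def by auto
    have "bloch_norm \<beta> (Ignk g n k (test_fn \<alpha> a)) \<le> max C 0 * bloch_norm \<alpha> (test_fn \<alpha> a)"
      using C[OF f] bloch_norm_nonneg[OF f] by (meson max.cobounded1 mult_right_mono order_trans)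
    also have "\<dots> \<le> max C 0 * B" by (rule mult_left_mono[OF f_norm]) simp
    finally show ?thesis using K[OF a maps[OF f]] K0 by (meson mult_left_mono order_trans)
  qed
  obtain G where inner: "\<And>z. cmod z \<le> 1/2 \<Longrightarrow> (1 - cmod z ^ 2) powr s * cmod (g z) \<le> G"
    using continuous_on_cball_bounded_above[OF weighted_norm_continuous_on_cball[OF g, of "1/2" s]] by auto
  have "(1 - cmod z ^ 2) powr s * cmod (g z) \<le> max (K * (max C 0 * B)) G" if "z \<in> unit_disc" for z
    using outer[OF that] inner[of z] by (cases "cmod z \<le> 1/2") auto
  then show ?thesis unfolding s_def by blast
qed

section \<open>Compactness\<close>

lemma weight_bounded_of_vanishing:
  assumes g: "g holomorphic_on unit_disc"
    and vanish: "\<forall>\<epsilon>>0. \<exists>r<1. \<forall>z\<in>unit_disc. r < cmod z \<longrightarrow> (1 - cmod z ^ 2) powr s * cmod (g z) < \<epsilon>"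
  shows "\<exists>C. \<forall>z\<in>unit_disc. (1 - cmod z ^ 2) powr s * cmod (g z) \<le> C"
proof -
  obtain r where r: "r < 1"
    and outer: "\<forall>z\<in>unit_disc. r < cmod z \<longrightarrow> (1 - cmod z ^ 2) powr s * cmod (g z) < 1"
    using vanish zero_less_one by blast
  obtain G where inner: "\<And>z. cmod z \<le> max r 0 \<Longrightarrow> (1 - cmod z ^ 2) powr s * cmod (g z) \<le> G"
    using continuous_on_cball_bounded_above[OF weighted_norm_continuous_on_cball[OF g, of "max r 0" s]] r
    by auto
  have "(1 - cmod z ^ 2) powr s * cmod (g z) \<le> max 1 G" if "z \<in> unit_disc" for z
    using outer that inner[of z] by (cases "r < cmod z") force+
  then show ?thesis by blast
qed

lemma Montel_growth_bounded:
  fixes F :: "nat \<Rightarrow> complex \<Rightarrow> complex"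
  assumes F: "\<And>j. F j holomorphic_on unit_disc" and p: "p \<ge> 0" and A: "A \<ge> 0"
    and bound: "\<And>j z. z \<in> unit_disc \<Longrightarrow> cmod (F j z) \<le> A * (1 - cmod z) powr (-p)"
  obtains v \<rho> where "v holomorphic_on unit_disc" "strict_mono \<rho>"
    "\<And>z. z \<in> unit_disc \<Longrightarrow> cmod (v z) \<le> A * (1 - cmod z) powr (-p)"
    "\<And>K. compact K \<Longrightarrow> K \<subseteq> unit_disc \<Longrightarrow> uniform_limit K (F \<circ> \<rho>) v sequentially"
proof -
  define H where "H = {h. h holomorphic_on unit_disc \<and> (\<forall>z\<in>unit_disc. cmod (h z) \<le> A * (1 - cmod z) powr (-p))}"
  have "\<exists>B. \<forall>h\<in>H. \<forall>z\<in>K. cmod (h z) \<le> B" if K: "compact K" "K \<subseteq> unit_disc" for K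
  proof -
    obtain r where r: "r < 1" "\<And>z. z \<in> K \<Longrightarrow> cmod z \<le> r"
      using compact_subset_unit_disc_norm_le[OF K] by blast
    have "cmod (h z) \<le> A * (1 - r) powr (-p)" if "h \<in> H" "z \<in> K" for h z
    proof -
      have "(1 - cmod z) powr (-p) \<le> (1 - r) powr (-p)"
        using p r that K(2) by (intro powr_mono2') auto
      moreover have "cmod (h z) \<le> A * (1 - cmod z) powr (-p)" using that K(2) unfolding H_def by blast
      ultimately show ?thesis using A by (meson mult_left_mono order_trans)
    qed
    then show ?thesis by blast
  qed
  moreover have "range F \<subseteq> H" unfolding H_def using F bound by blast
  ultimately obtain v \<rho> where v: "v holomorphic_on unit_disc" and \<rho>: "strict_mono \<rho>"
    and pointwise: "\<And>z. z \<in> unit_disc \<Longrightarrow> (\<lambda>j. F (\<rho> j) z) \<longlonglongrightarrow> v z"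
    and uniform: "\<And>K. compact K \<Longrightarrow> K \<subseteq> unit_disc \<Longrightarrow> uniform_limit K (F \<circ> \<rho>) v sequentially"
    using Montel[OF open_unit_disc, of H F] unfolding H_def by blast
  have "cmod (v z) \<le> A * (1 - cmod z) powr (-p)" if "z \<in> unit_disc" for z
    using tendsto_upperbound[OF tendsto_norm[OF pointwise[OF that]]] bound[OF that] by simp
  with v \<rho> uniform show ?thesis using that by blast
qed

lemma eventually_norm_mult_le_on_cball:
  fixes F :: "nat \<Rightarrow> complex \<Rightarrow> complex"
  assumes uniform: "uniform_limit (cball 0 r) F v sequentially"
    and g: "continuous_on (cball 0 r) g" and e: "e > 0"
  shows "\<forall>\<^sub>F j in sequentially. \<forall>z. cmod z \<le> r \<longrightarrow> cmod ((F j z - v z) * g z) \<le> e"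
proof -
  obtain G where G: "\<And>z. cmod z \<le> r \<Longrightarrow> cmod (g z) \<le> G"
    using continuous_on_cball_bounded_above[OF continuous_on_norm[OF g]] by blast
  define \<eta> where "\<eta> = e / (max G 0 + 1)"
  have \<eta>: "\<eta> > 0" "\<eta> * max G 0 \<le> e" using e by (auto simp: \<eta>_def field_simps)
  have "\<forall>\<^sub>F j in sequentially. \<forall>y\<in>cball 0 r. dist (F j y) (v y) < \<eta>"
    using uniform \<eta>(1) uniform_limit_iff by blast
  then show ?thesis
  proof (rule eventually_mono, intro allI impI)
    fix j z assume near: "\<forall>y\<in>cball 0 r. dist (F j y) (v y) < \<eta>" and z: "cmod z \<le> r"
    have "cmod ((F j z - v z) * g z) \<le> \<eta> * max G 0"
      unfolding norm_mult using near[rule_format, of z] G[OF z] \<eta>(1) z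
      by (intro mult_mono) (auto simp: dist_norm)
    with \<eta>(2) show "cmod ((F j z - v z) * g z) \<le> e" by linarith
  qed
qed

text \<open>Near the boundary the vanishing weight of \<open>g\<close> makes the product small, on the remaining
  compact disc the locally uniform convergence does.\<close>

lemma eventually_norm_mult_le_of_vanishing_weight:
  fixes F :: "nat \<Rightarrow> complex \<Rightarrow> complex"
  assumes uniform: "\<And>K. compact K \<Longrightarrow> K \<subseteq> unit_disc \<Longrightarrow> uniform_limit K F v sequentially"
    and bound: "\<And>j z. z \<in> unit_disc \<Longrightarrow> cmod (F j z - v z) \<le> A * (1 - cmod z) powr (-p)"
    and A: "A \<ge> 0" and ps: "p + s \<ge> 0" and g: "g holomorphic_on unit_disc"
    and vanish: "\<forall>\<epsilon>>0. \<exists>r<1. \<forall>z\<in>unit_disc. r < cmod z \<longrightarrow> (1 - cmod z ^ 2) powr s * cmod (g z) < \<epsilon>"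
    and e: "e > 0"
  shows "\<forall>\<^sub>F j in sequentially. \<forall>z\<in>unit_disc.
           cmod ((F j z - v z) * g z) \<le> e * (1 - cmod z) powr (-(p + s))"
proof -
  define \<epsilon> where "\<epsilon> = e / (A * 2 powr \<bar>s\<bar> + 1)"
  have den: "0 < A * 2 powr \<bar>s\<bar> + 1" using A by (intro add_nonneg_pos mult_nonneg_nonneg) simp_all
  have \<epsilon>: "\<epsilon> > 0" unfolding \<epsilon>_def using e den by simp
  have A\<epsilon>: "A * \<epsilon> * 2 powr \<bar>s\<bar> \<le> e" unfolding \<epsilon>_def using e den by (simp add: field_simps)
  obtain r where outer: "\<forall>z\<in>unit_disc. r < cmod z \<longrightarrow> (1 - cmod z ^ 2) powr s * cmod (g z) < \<epsilon>"
    and r: "r < 1" using vanish \<epsilon> by blast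
  have r': "max r 0 < 1" using r by simp
  have "\<forall>\<^sub>F j in sequentially. \<forall>z. cmod z \<le> max r 0 \<longrightarrow> cmod ((F j z - v z) * g z) \<le> e"
    by (rule eventually_norm_mult_le_on_cball[OF uniform[OF compact_cball cball_0_subset_unit_disc[OF r']] _ e])
       (intro holomorphic_on_imp_continuous_on holomorphic_on_subset[OF g cball_0_subset_unit_disc[OF r']])
  then show ?thesis
  proof (rule eventually_mono, intro ballI)
    fix j z assume inner: "\<forall>z. cmod z \<le> max r 0 \<longrightarrow> cmod ((F j z - v z) * g z) \<le> e"
      and z: "z \<in> unit_disc"
    show "cmod ((F j z - v z) * g z) \<le> e * (1 - cmod z) powr (-(p + s))"
    proof (cases "cmod z \<le> max r 0")
      case True
      have "1 \<le> (1 - cmod z) powr (-(p + s))" using one_le_one_minus_norm_powr[OF _ ps, of z] z by simp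
      from mult_left_mono[OF this less_imp_le[OF e]] inner True show ?thesis by fastforce
    next
      case False
      then have "(1 - cmod z ^ 2) powr s * cmod (g z) \<le> \<epsilon>" using outer z by force
      from norm_mult_le_growth[OF _ bound[OF z] A this] z
      have "cmod ((F j z - v z) * g z) \<le> A * \<epsilon> * 2 powr \<bar>s\<bar> * (1 - cmod z) powr (-(p + s))" by simp
      also have "\<dots> \<le> e * (1 - cmod z) powr (-(p + s))" using A\<epsilon> by (intro mult_right_mono) auto
      finally show ?thesis .
    qed
  qed
qed

lemma bloch_norm_integ_op_iterate_tendsto_0:
  assumes u: "\<And>j. u j holomorphic_on unit_disc" and \<beta>: "\<beta> > 0" and n: "n \<ge> 1"
    and small: "\<And>e. e > 0 \<Longrightarrow> \<forall>\<^sub>F j in sequentially. \<forall>z\<in>unit_disc.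
                  cmod (u j z) \<le> e * (1 - cmod z) powr (-(real n - 1 + \<beta>))"
  shows "(\<lambda>j. bloch_norm \<beta> ((integ_op ^^ n) (u j))) \<longlonglongrightarrow> 0"
proof (rule order_tendstoI)
  define K where "K = 2 powr \<beta> * integ_growth_const (real n - 1 + \<beta>) (n - 1)"
  have K: "K > 0" unfolding K_def using integ_growth_const_pos[of "n - 1" "real n - 1 + \<beta>"] \<beta> n
    by (simp add: of_nat_diff)
  have le: "\<forall>\<^sub>F j in sequentially. (integ_op ^^ n) (u j) \<in> bloch_space \<beta>
      \<and> bloch_norm \<beta> ((integ_op ^^ n) (u j)) \<le> K * e" if "e > 0" for e
    using small[OF that]
  proof eventually_elim
    case (elim j)
    then have "\<And>w. w \<in> unit_disc \<Longrightarrow> cmod (u j w) \<le> e * (1 - cmod w) powr (-(real n - 1 + \<beta>))"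
      by blast
    from integ_op_iterate_bloch[OF u less_imp_le[OF that] \<beta> n this]
    show ?case by (simp add: K_def mult_ac)
  qed
  fix x :: real
  show "x < 0 \<Longrightarrow> \<forall>\<^sub>F j in sequentially. x < bloch_norm \<beta> ((integ_op ^^ n) (u j))"
    using le[OF zero_less_one] by eventually_elim (use bloch_norm_nonneg in force)
  assume x: "0 < x"
  with K have "x / (2 * K) > 0" by simp
  from le[OF this] show "\<forall>\<^sub>F j in sequentially. bloch_norm \<beta> ((integ_op ^^ n) (u j)) < x"
    by eventually_elim (use x K in \<open>auto simp: field_simps\<close>)
qed

lemma integ_op_iterate_mult_has_convergent_subsequence:
  fixes F :: "nat \<Rightarrow> complex \<Rightarrow> complex"
  assumes F: "\<And>j. F j holomorphic_on unit_disc"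
    and bound: "\<And>j z. z \<in> unit_disc \<Longrightarrow> cmod (F j z) \<le> A * (1 - cmod z) powr (-p)"
    and A: "A \<ge> 0" and p: "p \<ge> 0" and ps: "p + s = real n - 1 + \<beta>" and \<beta>: "\<beta> > 0" and n: "n \<ge> 1"
    and g: "g holomorphic_on unit_disc"
    and vanish: "\<forall>\<epsilon>>0. \<exists>r<1. \<forall>z\<in>unit_disc. r < cmod z \<longrightarrow> (1 - cmod z ^ 2) powr s * cmod (g z) < \<epsilon>"
  obtains \<rho> h where "strict_mono \<rho>" "h \<in> bloch_space \<beta>"
    "(\<lambda>j. bloch_norm \<beta> (\<lambda>z. (integ_op ^^ n) (\<lambda>w. F (\<rho> j) w * g w) z - h z)) \<longlonglongrightarrow> 0"
proof -
  obtain C where C: "\<forall>z\<in>unit_disc. (1 - cmod z ^ 2) powr s * cmod (g z) \<le> C"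
    using weight_bounded_of_vanishing[OF g vanish] by blast
  have "cmod (g 0) \<le> C" using C[rule_format, of 0] by simp
  then have C0: "C \<ge> 0" using norm_ge_zero order_trans by blast
  obtain v \<rho> where v: "v holomorphic_on unit_disc" and \<rho>: "strict_mono \<rho>"
    and v_bound: "\<And>z. z \<in> unit_disc \<Longrightarrow> cmod (v z) \<le> A * (1 - cmod z) powr (-p)"
    and uniform: "\<And>K. compact K \<Longrightarrow> K \<subseteq> unit_disc \<Longrightarrow> uniform_limit K (F \<circ> \<rho>) v sequentially"
    using Montel_growth_bounded[of F p A, OF F p A bound] by blast
  define h where "h = (integ_op ^^ n) (\<lambda>z. v z * g z)"
  define u where "u j = (\<lambda>z. (F (\<rho> j) z - v z) * g z)" for j
  have vg: "cmod (v z * g z) \<le> A * C * 2 powr \<bar>s\<bar> * (1 - cmod z) powr (-(real n - 1 + \<beta>))"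
    if "z \<in> unit_disc" for z
    using norm_mult_le_growth[OF _ v_bound[OF that] A, of s "g z" C] C that ps by simp
  have "0 \<le> A * C * 2 powr \<bar>s\<bar>" using A C0 by simp
  from integ_op_iterate_bloch(1)[OF holomorphic_on_mult[OF v g] this \<beta> n vg]
  have h: "h \<in> bloch_space \<beta>" unfolding h_def .
  have "bloch_norm \<beta> (\<lambda>z. (integ_op ^^ n) (\<lambda>w. F (\<rho> j) w * g w) z - h z) = bloch_norm \<beta> ((integ_op ^^ n) (u j))"
    for j
  proof (rule bloch_norm_cong)
    fix z assume "z \<in> unit_disc"
    from integ_op_iterate_diff[OF holomorphic_on_mult[OF F g] holomorphic_on_mult[OF v g] this, of n "\<rho> j"]
    show "(integ_op ^^ n) (\<lambda>w. F (\<rho> j) w * g w) z - h z = (integ_op ^^ n) (u j) z"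
      by (simp add: h_def u_def left_diff_distrib)
  qed
  moreover have "(\<lambda>j. bloch_norm \<beta> ((integ_op ^^ n) (u j))) \<longlonglongrightarrow> 0"
  proof (rule bloch_norm_integ_op_iterate_tendsto_0[OF _ \<beta> n])
    show "u j holomorphic_on unit_disc" for j
      unfolding u_def using F v g by (intro holomorphic_intros)
    fix e :: real assume "e > 0"
    have "cmod ((F \<circ> \<rho>) j z - v z) \<le> (2 * A) * (1 - cmod z) powr (-p)" if "z \<in> unit_disc" for j z
      using norm_triangle_ineq4[of "F (\<rho> j) z" "v z"] bound[OF that, of "\<rho> j"] v_bound[OF that] by simp
    from eventually_norm_mult_le_of_vanishing_weight[OF uniform this _ _ g vanish \<open>e > 0\<close>]
    show "\<forall>\<^sub>F j in sequentially. \<forall>z\<in>unit_disc. cmod (u j z) \<le> e * (1 - cmod z) powr (-(real n - 1 + \<beta>))"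
      using A ps n \<beta> unfolding u_def comp_def by simp
  qed
  ultimately show ?thesis using that[OF \<rho> h] by simp
qed

lemma compact_bloch_op_Ignk:
  assumes \<alpha>: "\<alpha> > 0" and \<beta>: "\<beta> > 0" and n: "n \<ge> 1" and k: "k \<ge> 1"
    and g: "g holomorphic_on unit_disc"
    and vanish: "\<forall>\<epsilon>>0. \<exists>r<1. \<forall>z\<in>unit_disc. r < cmod z \<longrightarrow>
               (1 - (cmod z)^2) powr (real n - real k + \<beta> - \<alpha>) * cmod (g z) < \<epsilon>"
  shows "compact_bloch_op \<alpha> \<beta> (Ignk g n k)"
  unfolding compact_bloch_op_def
proof (intro conjI allI impI)
  define s where "s = real n - real k + \<beta> - \<alpha>"
  define p where "p = \<alpha> + real k - 1"
  have p: "p \<ge> 0" and ps: "p + s = real n - 1 + \<beta>" using \<alpha> k unfolding p_def s_def by simp_all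
  show "\<forall>f\<in>bloch_space \<alpha>. Ignk g n k f \<in> bloch_space \<beta>"
    using weight_bounded_of_vanishing[OF g vanish] bounded_bloch_op_Ignk[OF \<alpha> \<beta> n k g]
    unfolding bounded_bloch_op_def by blast
  fix fs :: "nat \<Rightarrow> complex \<Rightarrow> complex"
  assume fs: "\<forall>j. fs j \<in> bloch_space \<alpha>" and "\<exists>M. \<forall>j. bloch_norm \<alpha> (fs j) \<le> M"
  then obtain M where M: "\<And>j. bloch_norm \<alpha> (fs j) \<le> M" by blast
  define A where "A = fact (k - 1) * 2 powr \<alpha> * 2 powr p * M"
  have "M \<ge> 0" using M[of 0] bloch_norm_nonneg[of "fs 0" \<alpha>] fs by simp
  then have A: "A \<ge> 0" by (simp add: A_def)
  define F where "F j = (deriv ^^ k) (fs j)" for j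
  have F: "F j holomorphic_on unit_disc" for j
    unfolding F_def using fs holomorphic_higher_deriv[OF bloch_space_imp_holomorphic open_unit_disc] by blast
  have bound: "cmod (F j z) \<le> A * (1 - cmod z) powr (-p)" if z: "z \<in> unit_disc" for j z
  proof -
    have "cmod (F j z) \<le> fact (k - 1) * 2 powr \<alpha> * 2 powr p * bloch_norm \<alpha> (fs j) * (1 - cmod z) powr (-p)"
      using norm_higher_deriv_le_bloch_norm[of "fs j" \<alpha> k z] fs \<alpha> k z unfolding F_def p_def by simp
    also have "\<dots> \<le> A * (1 - cmod z) powr (-p)"
      unfolding A_def using M[of j] by (intro mult_right_mono mult_left_mono) simp_all
    finally show ?thesis .
  qed
  obtain \<rho> h where "strict_mono \<rho>" "h \<in> bloch_space \<beta>"
    "(\<lambda>j. bloch_norm \<beta> (\<lambda>z. (integ_op ^^ n) (\<lambda>w. F (\<rho> j) w * g w) z - h z)) \<longlonglongrightarrow> 0"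
    using integ_op_iterate_mult_has_convergent_subsequence[OF F bound A p ps \<beta> n g vanish[folded s_def]] .
  then show "\<exists>r h. strict_mono r \<and> h \<in> bloch_space \<beta> \<and>
           (\<lambda>j. bloch_norm \<beta> (\<lambda>z. Ignk g n k (fs (r j)) z - h z)) \<longlonglongrightarrow> 0"
    unfolding Ignk_def F_def by blast
qed

lemma not_vanishing_imp_boundary_sequence:
  fixes \<phi> :: "complex \<Rightarrow> real"
  assumes "\<not> (\<forall>\<epsilon>>0. \<exists>r<1. \<forall>z\<in>unit_disc. r < cmod z \<longrightarrow> \<phi> z < \<epsilon>)"
  obtains \<epsilon> a where "\<epsilon> > 0" "\<And>j. a j \<in> unit_disc" "\<And>j. 1/2 \<le> cmod (a j)"
    "(\<lambda>j. cmod (a j)) \<longlonglongrightarrow> 1" "\<And>j. \<epsilon> \<le> \<phi> (a j)"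
proof -
  obtain \<epsilon> where \<epsilon>: "\<epsilon> > 0" and bad: "\<forall>r<1. \<exists>z\<in>unit_disc. r < cmod z \<and> \<epsilon> \<le> \<phi> z"
    using assms by (auto simp: not_less) (metis linorder_not_le)
  have "\<forall>j. \<exists>z. z \<in> unit_disc \<and> max (1/2) (1 - 1 / real (Suc j)) < cmod z \<and> \<epsilon> \<le> \<phi> z"
  proof
    fix j
    have "max (1/2) (1 - 1 / real (Suc j)) < 1" by simp
    then show "\<exists>z. z \<in> unit_disc \<and> max (1/2) (1 - 1 / real (Suc j)) < cmod z \<and> \<epsilon> \<le> \<phi> z"
      using bad by blast
  qed
  from choice[OF this] obtain a
    where a: "\<forall>j. a j \<in> unit_disc \<and> max (1/2) (1 - 1 / real (Suc j)) < cmod (a j) \<and> \<epsilon> \<le> \<phi> (a j)"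
    by blast
  have lim: "(\<lambda>j. 1 - 1 / real (Suc j)) \<longlonglongrightarrow> 1"
    using tendsto_diff[OF tendsto_const LIMSEQ_inverse_real_of_nat, of 1] by (simp add: inverse_eq_divide)
  have in_disc: "a j \<in> unit_disc" and half: "1/2 \<le> cmod (a j)" and far: "\<epsilon> \<le> \<phi> (a j)"
    and lower: "1 - 1 / real (Suc j) \<le> cmod (a j)" and upper: "cmod (a j) \<le> 1" for j
    using a by (auto simp: less_imp_le)
  have "(\<lambda>j. cmod (a j)) \<longlonglongrightarrow> 1"
    by (rule tendsto_sandwich[OF always_eventually[OF allI[OF lower]] always_eventually[OF allI[OF upper]]
          lim tendsto_const])
  from that[OF \<epsilon> in_disc half this far] show ?thesis .
qed

lemma vanishing_weight_of_compact_bloch_op_Ignk: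
  assumes \<alpha>: "\<alpha> > 0" and \<beta>: "\<beta> > 0" and n: "n \<ge> 1" and g: "g holomorphic_on unit_disc"
    and T: "compact_bloch_op \<alpha> \<beta> (Ignk g n k)"
  shows "\<forall>\<epsilon>>0. \<exists>r<1. \<forall>z\<in>unit_disc. r < cmod z \<longrightarrow>
           (1 - (cmod z)^2) powr (real n - real k + \<beta> - \<alpha>) * cmod (g z) < \<epsilon>"
proof (rule ccontr)
  define T where "T = Ignk g n k"
  assume "\<not> ?thesis"
  from not_vanishing_imp_boundary_sequence[OF this] obtain \<epsilon> a where \<epsilon>: "\<epsilon> > 0" and a: "\<And>j. a j \<in> unit_disc" and a_half: "\<And>j. 1/2 \<le> cmod (a j)"
    and a_lim: "(\<lambda>j. cmod (a j)) \<longlonglongrightarrow> 1"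
    and big: "\<And>j. \<epsilon> \<le> (1 - cmod (a j) ^ 2) powr (real n - real k + \<beta> - \<alpha>) * cmod (g (a j))"
    by blast
  have f: "\<forall>j. test_fn \<alpha> (a j) \<in> bloch_space \<alpha>"
    and f_norm: "\<forall>j. bloch_norm \<alpha> (test_fn \<alpha> (a j)) \<le> 1 + real (test_exponent \<alpha>) * 2 ^ (test_exponent \<alpha> + 1)"
    using test_fn_bloch[OF \<alpha> a] by auto
  have "\<exists>\<rho> h. strict_mono \<rho> \<and> h \<in> bloch_space \<beta> \<and>
      (\<lambda>j. bloch_norm \<beta> (\<lambda>z. T (test_fn \<alpha> (a (\<rho> j))) z - h z)) \<longlonglongrightarrow> 0"
    using T f f_norm unfolding compact_bloch_op_def T_def by (elim conjE allE[of _ "\<lambda>j. test_fn \<alpha> (a j)"]) blast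
  then obtain \<rho> h where \<rho>: "strict_mono \<rho>" and h: "h \<in> bloch_space \<beta>"
    and lim: "(\<lambda>j. bloch_norm \<beta> (\<lambda>z. T (test_fn \<alpha> (a (\<rho> j))) z - h z)) \<longlonglongrightarrow> 0"
    by blast
  have Tf: "T (test_fn \<alpha> (a j)) \<in> bloch_space \<beta>" for j
    using T f unfolding compact_bloch_op_def T_def by blast
  have h': "deriv h w = 0" if w: "w \<in> unit_disc" for w
  proof (rule LIMSEQ_unique)
    show "(\<lambda>j. deriv (T (test_fn \<alpha> (a (\<rho> j)))) w) \<longlonglongrightarrow> deriv h w"
      by (rule deriv_tendsto_of_bloch_norm_tendsto[OF Tf h lim w])
    show "(\<lambda>j. deriv (T (test_fn \<alpha> (a (\<rho> j)))) w) \<longlonglongrightarrow> 0"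
      using deriv_Ignk_test_fn_tendsto_0[OF \<alpha> n g a LIMSEQ_subseq_LIMSEQ[OF a_lim \<rho>, unfolded comp_def] w]
      unfolding T_def .
  qed
  obtain K where K: "\<And>a F. a \<in> unit_disc \<Longrightarrow> 1/2 \<le> cmod a \<Longrightarrow> F \<in> bloch_space \<beta> \<Longrightarrow>
      (\<And>w. w \<in> unit_disc \<Longrightarrow> deriv F w = deriv (T (test_fn \<alpha> a)) w) \<Longrightarrow>
      (1 - cmod a ^ 2) powr (real n - real k + \<beta> - \<alpha>) * cmod (g a) \<le> K * bloch_norm \<beta> F"
    using weighted_norm_le_of_Ignk_test_fn[OF \<alpha> \<beta> n g] unfolding T_def by metis
  have "\<epsilon> \<le> K * bloch_norm \<beta> (\<lambda>z. T (test_fn \<alpha> (a (\<rho> j))) z - h z)" for j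
  proof -
    have "deriv (\<lambda>z. T (test_fn \<alpha> (a (\<rho> j))) z - h z) w = deriv (T (test_fn \<alpha> (a (\<rho> j)))) w"
      if "w \<in> unit_disc" for w
      using deriv_diff_unit_disc[OF bloch_space_imp_holomorphic[OF Tf] bloch_space_imp_holomorphic[OF h] that]
        h'[OF that] by simp
    from K[OF a[of "\<rho> j"] a_half[of "\<rho> j"] bloch_space_diff[OF Tf[of "\<rho> j"] h] this]
    show ?thesis using big[of "\<rho> j"] by linarith
  qed
  moreover obtain j where "K * bloch_norm \<beta> (\<lambda>z. T (test_fn \<alpha> (a (\<rho> j))) z - h z) < \<epsilon>"
    using order_tendstoD(2)[OF tendsto_mult_right_zero[OF lim, of K] \<epsilon>] eventually_sequentially by auto
  ultimately show False by (meson not_le)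
qed

theorem proposition3p1:
  fixes \<alpha> \<beta> :: real and n k :: nat and g :: "complex \<Rightarrow> complex"
  assumes "\<alpha> > 0" and "\<beta> > 0" and "n > 0" and "0 < k" and "k \<le> n - 1"
    and "g holomorphic_on unit_disc"
  shows "(bounded_bloch_op \<alpha> \<beta> (Ignk g n k) \<longleftrightarrow>
            (\<exists>C. \<forall>z\<in>unit_disc.
               (1 - (cmod z)^2) powr (real n - real k + \<beta> - \<alpha>) * cmod (g z) \<le> C))
       \<and> (compact_bloch_op \<alpha> \<beta> (Ignk g n k) \<longleftrightarrow>
            (\<forall>\<epsilon>>0. \<exists>r<1. \<forall>z\<in>unit_disc. r < cmod z \<longrightarrow>
               (1 - (cmod z)^2) powr (real n - real k + \<beta> - \<alpha>) * cmod (g z) < \<epsilon>))"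
proof -
  have n: "n \<ge> 1" and k: "k \<ge> 1" using assms(3,4) by simp_all
  show ?thesis
  proof (intro conjI iffI)
    show "\<exists>C. \<forall>z\<in>unit_disc. (1 - (cmod z)^2) powr (real n - real k + \<beta> - \<alpha>) * cmod (g z) \<le> C"
      if "bounded_bloch_op \<alpha> \<beta> (Ignk g n k)"
      using weight_bounded_of_bounded_bloch_op_Ignk[OF assms(1,2) n assms(6) that] .
    show "bounded_bloch_op \<alpha> \<beta> (Ignk g n k)"
      if "\<exists>C. \<forall>z\<in>unit_disc. (1 - (cmod z)^2) powr (real n - real k + \<beta> - \<alpha>) * cmod (g z) \<le> C"
      using that bounded_bloch_op_Ignk[OF assms(1,2) n k assms(6)] by blast
    show "\<forall>\<epsilon>>0. \<exists>r<1. \<forall>z\<in>unit_disc. r < cmod z \<longrightarrow>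
            (1 - (cmod z)^2) powr (real n - real k + \<beta> - \<alpha>) * cmod (g z) < \<epsilon>"
      if "compact_bloch_op \<alpha> \<beta> (Ignk g n k)"
      using vanishing_weight_of_compact_bloch_op_Ignk[OF assms(1,2) n assms(6) that] .
    show "compact_bloch_op \<alpha> \<beta> (Ignk g n k)"
      if "\<forall>\<epsilon>>0. \<exists>r<1. \<forall>z\<in>unit_disc. r < cmod z \<longrightarrow>
            (1 - (cmod z)^2) powr (real n - real k + \<beta> - \<alpha>) * cmod (g z) < \<epsilon>"
      using compact_bloch_op_Ignk[OF assms(1,2) n k assms(6) that] .
  qed
qed

end
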